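(* Let $p$ be a prime and $A,T$ countable $p$-groups with $A$ reduced. Then $\mathrm{Ext}(T,A)$ is a Polish group if and only if either $T^1=0$ or $A$ is bounded.
   Context: $T^1=\bigcap_{n\ge1}nT$ is the first Ulm subgroup; $A$ is reduced if it has no nonzero divisible subgroup, bounded if $nA=0$ for some $n\ge1$. $\mathrm{Ext}(T,A)=\mathsf Z(T,A)/\mathsf B(T,A)$ as a group with a Polish cover, where $\mathsf Z(T,A)$ is the Polish group (closed in $A^{T\times T}$, $A$ discrete) of functions $c:T\times T\to A$ with $c(x,0)=0$, $c(x,y)=c(y,x)$, $c(y,z)-c(x+y,z)+c(x,y+z)-c(x,y)=0$, and $\mathsf B(T,A)$ is the Polishable subgroup of coboundaries $c(x,y)=\phi(y)-\phi(x+y)+\phi(x)$ with $\phi(0)=0$. $\mathrm{Ext}(T,A)$ is a Polish group when $\mathsf B(T,A)$ is closed in $\mathsf Z(T,A)$. *)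

theory Defs
  imports "HOL-Analysis.Analysis" "HOL-Library.Countable"
begin

primrec nmul :: "nat \<Rightarrow> 'a::ab_group_add \<Rightarrow> 'a" where
  "nmul 0 x = 0"
| "nmul (Suc n) x = x + nmul n x"

definition p_group :: "nat \<Rightarrow> 'a::ab_group_add itself \<Rightarrow> bool" where
  "p_group p _ \<longleftrightarrow> prime p \<and> (\<forall>x::'a. \<exists>k. nmul (p ^ k) x = 0)"

definition is_subgroup :: "'a::ab_group_add set \<Rightarrow> bool" where
  "is_subgroup D \<longleftrightarrow> 0 \<in> D \<and> (\<forall>x\<in>D. \<forall>y\<in>D. x + y \<in> D) \<and> (\<forall>x\<in>D. - x \<in> D)"

definition divisible_set :: "'a::ab_group_add set \<Rightarrow> bool" where
  "divisible_set D \<longleftrightarrow> (\<forall>d\<in>D. \<forall>n::nat. n \<ge> 1 \<longrightarrow> (\<exists>e\<in>D. nmul n e = d))"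

definition reduced :: "'a::ab_group_add itself \<Rightarrow> bool" where
  "reduced _ \<longleftrightarrow> (\<forall>D::'a set. is_subgroup D \<and> divisible_set D \<longrightarrow> D = {0})"

definition bounded_grp :: "'a::ab_group_add itself \<Rightarrow> bool" where
  "bounded_grp _ \<longleftrightarrow> (\<exists>n::nat. n \<ge> 1 \<and> (\<forall>a::'a. nmul n a = 0))"

definition ulm1 :: "'a::ab_group_add set" where
  "ulm1 = (\<Inter>n\<in>{n::nat. n \<ge> 1}. range (nmul n))"

definition cocycles :: "('t::ab_group_add \<times> 't \<Rightarrow> 'a::ab_group_add) set" where
  "cocycles = {c. (\<forall>x. c (x, 0) = 0) \<and> (\<forall>x y. c (x, y) = c (y, x)) \<and>
     (\<forall>x y z. c (y, z) - c (x + y, z) + c (x, y + z) - c (x, y) = 0)}"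

definition coboundaries :: "('t::ab_group_add \<times> 't \<Rightarrow> 'a::ab_group_add) set" where
  "coboundaries = {c. \<exists>\<phi>. \<phi> 0 = 0 \<and> (\<forall>x y. c (x, y) = \<phi> y - \<phi> (x + y) + \<phi> x)}"

definition fun_top :: "('t \<times> 't \<Rightarrow> 'a) topology" where
  "fun_top = product_topology (\<lambda>_. discrete_topology UNIV) UNIV"

text \<open>Ext(T,A) = Z/B is a Polish group iff B is closed in Z (context convention).\<close>
definition Ext_polish :: "'t::ab_group_add itself \<Rightarrow> 'a::ab_group_add itself \<Rightarrow> bool" where
  "Ext_polish _ _ \<longleftrightarrow>
     closedin (subtopology (fun_top :: ('t \<times> 't \<Rightarrow> 'a) topology) (cocycles :: ('t \<times> 't \<Rightarrow> 'a) set))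
              (coboundaries :: ('t \<times> 't \<Rightarrow> 'a) set)"

end

theory Submission
  imports Defs
begin

text \<open>Since \<open>fun_top\<close> is the topology of pointwise convergence, \<open>B(T, A)\<close> is closed in
  \<open>Z(T, A)\<close> iff every cocycle that agrees with a coboundary on each finite set is a
  coboundary. A cocycle is a coboundary iff its extension \<open>E\<close> of \<open>A\<close> by \<open>T\<close> has a
  homomorphic section, and local splitting makes \<open>A\<close> pure in \<open>E\<close>. If \<open>T\<^sup>1 = 0\<close>, so that
  no nonzero element of \<open>T\<close> has infinite \<open>p\<close>-height, or if \<open>A\<close> is bounded, a section is
  built on the countable group \<open>T\<close> one cyclic step at a time: in the first case each new
  generator is chosen of maximal height in its coset and the section preserves heights, in
  the second the section keeps \<open>A\<close> pure modulo what has been built.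

  Conversely, let \<open>y \<noteq> 0\<close> of order \<open>p\<close> lie in \<open>T\<^sup>1\<close>, and let \<open>A\<close> be reduced and
  unbounded. Then \<open>A\<close> carries a series \<open>\<Sum> d\<^sub>k\<close> of elements of order \<open>p\<close> with
  \<open>d\<^sub>k \<in> p\<^sup>k\<^sup>+\<^sup>1 A\<close> that converges to no \<open>\<alpha>\<close> in the \<open>p\<close>-adic topology.
  Homomorphisms \<open>\<psi>\<^sub>k : T[p\<^sup>k\<^sup>+\<^sup>1] \<rightarrow> A\<close> with \<open>\<psi>\<^sub>k y = d\<^sub>k\<close> glue to a locally split
  cocycle; if it were the coboundary of \<open>f\<close>, the series would converge to \<open>f y\<close>.\<close>

section \<open>Locally split cocycles\<close>

definition locally_split :: "('t::ab_group_add \<times> 't \<Rightarrow> 'a::ab_group_add) \<Rightarrow> bool" where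
  "locally_split c \<longleftrightarrow> (\<forall>F. finite F \<longrightarrow>
     (\<exists>\<phi>. \<phi> 0 = 0 \<and> (\<forall>x y. (x, y) \<in> F \<longrightarrow> c (x, y) = \<phi> y - \<phi> (x + y) + \<phi> x)))"

lemma coboundary_imp_locally_split: "c \<in> coboundaries \<Longrightarrow> locally_split c"
  unfolding coboundaries_def locally_split_def by blast

lemma coboundaries_subset_cocycles:
  "(coboundaries :: ('t::ab_group_add \<times> 't \<Rightarrow> 'a::ab_group_add) set) \<subseteq> cocycles"
proof
  fix d :: "'t \<times> 't \<Rightarrow> 'a"
  assume "d \<in> coboundaries"
  then obtain \<phi> where \<phi>: "\<phi> 0 = 0" "\<And>x y. d (x, y) = \<phi> y - \<phi> (x + y) + \<phi> x"
    unfolding coboundaries_def by blast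
  show "d \<in> cocycles"
    unfolding cocycles_def by (auto simp: \<phi> algebra_simps add.commute)
qed

lemma openin_fun_top_iff:
  "openin fun_top S \<longleftrightarrow> (\<forall>x\<in>S. \<exists>F. finite F \<and> (\<forall>y. (\<forall>i\<in>F. y i = x i) \<longrightarrow> y \<in> S))"
proof
  assume "openin fun_top S"
  then have basic: "\<forall>x\<in>S. \<exists>U. finite {i. U i \<noteq> UNIV} \<and> x \<in> Pi\<^sub>E UNIV U \<and> Pi\<^sub>E UNIV U \<subseteq> S"
    unfolding fun_top_def openin_product_topology_alt by simp
  show "\<forall>x\<in>S. \<exists>F. finite F \<and> (\<forall>y. (\<forall>i\<in>F. y i = x i) \<longrightarrow> y \<in> S)"
  proof
    fix x assume "x \<in> S"
    then obtain U where U: "finite {i. U i \<noteq> UNIV}" "x \<in> Pi\<^sub>E UNIV U" "Pi\<^sub>E UNIV U \<subseteq> S"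
      using basic by blast
    have "y \<in> S" if "\<forall>i\<in>{i. U i \<noteq> UNIV}. y i = x i" for y
    proof -
      have "y \<in> Pi\<^sub>E UNIV U" using that U(2) by (auto simp: PiE_iff) (metis UNIV_I)
      then show ?thesis using U(3) by blast
    qed
    then show "\<exists>F. finite F \<and> (\<forall>y. (\<forall>i\<in>F. y i = x i) \<longrightarrow> y \<in> S)"
      using U(1) by blast
  qed
next
  assume cyl: "\<forall>x\<in>S. \<exists>F. finite F \<and> (\<forall>y. (\<forall>i\<in>F. y i = x i) \<longrightarrow> y \<in> S)"
  show "openin fun_top S"
    unfolding fun_top_def openin_product_topology_alt
  proof
    fix x assume "x \<in> S"
    then obtain F where F: "finite F" "\<forall>y. (\<forall>i\<in>F. y i = x i) \<longrightarrow> y \<in> S" using cyl by blast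
    define U where "U i = (if i \<in> F then {x i} else UNIV)" for i
    have "finite {i. U i \<noteq> UNIV}" using F(1) by (rule finite_subset[rotated]) (auto simp: U_def)
    moreover have "x \<in> Pi\<^sub>E UNIV U" by (auto simp: U_def)
    moreover have "Pi\<^sub>E UNIV U \<subseteq> S"
    proof
      fix y assume "y \<in> Pi\<^sub>E UNIV U"
      then have "\<forall>i\<in>F. y i = x i" by (auto simp: U_def PiE_iff) (metis singletonD)
      then show "y \<in> S" using F(2) by blast
    qed
    ultimately show "\<exists>U. finite {i \<in> UNIV. U i \<noteq> topspace (discrete_topology UNIV)} \<and>
        (\<forall>i\<in>UNIV. openin (discrete_topology UNIV) (U i)) \<and> x \<in> Pi\<^sub>E UNIV U \<and> Pi\<^sub>E UNIV U \<subseteq> S"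
      by auto
  qed
qed

lemma closedin_locally_split: "closedin fun_top {c. locally_split c}"
proof -
  have "openin fun_top (- {c. locally_split c})"
    unfolding openin_fun_top_iff
  proof
    fix c assume "c \<in> - {c. locally_split c}"
    then obtain F where F: "finite F"
      "\<nexists>\<phi>. \<phi> 0 = 0 \<and> (\<forall>x y. (x, y) \<in> F \<longrightarrow> c (x, y) = \<phi> y - \<phi> (x + y) + \<phi> x)"
      unfolding locally_split_def by blast
    have "\<not> locally_split d" if "\<forall>i\<in>F. d i = c i" for d
      using F that unfolding locally_split_def by (metis (no_types, lifting))
    then show "\<exists>F. finite F \<and> (\<forall>d. (\<forall>i\<in>F. d i = c i) \<longrightarrow> d \<in> - {c. locally_split c})"
      using F(1) by blast
  qed
  then show ?thesis by (simp add: closedin_def fun_top_def Compl_eq_Diff_UNIV)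
qed

lemma locally_split_mem_closed_superset:
  assumes K: "closedin fun_top K" "coboundaries \<subseteq> K" and c: "locally_split c"
  shows "c \<in> K"
proof (rule ccontr)
  assume "c \<notin> K"
  moreover have "openin fun_top (UNIV - K)"
    using K(1) by (simp add: closedin_def fun_top_def)
  ultimately obtain F where F: "finite F" "\<forall>d. (\<forall>i\<in>F. d i = c i) \<longrightarrow> d \<in> UNIV - K"
    unfolding openin_fun_top_iff by blast
  obtain \<phi> where \<phi>: "\<phi> 0 = 0" "\<forall>x y. (x, y) \<in> F \<longrightarrow> c (x, y) = \<phi> y - \<phi> (x + y) + \<phi> x"
    using c F(1) unfolding locally_split_def by blast
  define d where "d = (\<lambda>(x, y). \<phi> y - \<phi> (x + y) + \<phi> x)"
  have "d \<in> K" using K(2) \<phi>(1) unfolding coboundaries_def d_def by auto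
  moreover have "\<forall>i\<in>F. d i = c i" using \<phi>(2) by (auto simp: d_def)
  ultimately show False using F(2) by blast
qed

lemma Ext_polish_iff_locally_split:
  "Ext_polish TYPE('t::ab_group_add) TYPE('a::ab_group_add) \<longleftrightarrow>
   (\<forall>c::'t \<times> 't \<Rightarrow> 'a. c \<in> cocycles \<longrightarrow> locally_split c \<longrightarrow> c \<in> coboundaries)"
proof
  assume "Ext_polish TYPE('t) TYPE('a)"
  then obtain K where "closedin fun_top K" "(coboundaries :: ('t \<times> 't \<Rightarrow> 'a) set) = K \<inter> cocycles"
    unfolding Ext_polish_def closedin_subtopology by blast
  then show "\<forall>c::'t \<times> 't \<Rightarrow> 'a. c \<in> cocycles \<longrightarrow> locally_split c \<longrightarrow> c \<in> coboundaries"
    using locally_split_mem_closed_superset[of K] by blast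
next
  assume "\<forall>c::'t \<times> 't \<Rightarrow> 'a. c \<in> cocycles \<longrightarrow> locally_split c \<longrightarrow> c \<in> coboundaries"
  then have "(coboundaries :: ('t \<times> 't \<Rightarrow> 'a) set) = {c. locally_split c} \<inter> cocycles"
    using coboundaries_subset_cocycles coboundary_imp_locally_split by blast
  then show "Ext_polish TYPE('t) TYPE('a)"
    unfolding Ext_polish_def closedin_subtopology using closedin_locally_split by blast
qed

lemma nmul_add_left: "nmul (m + n) x = nmul m x + nmul n x"
  by (induct m) (simp_all add: add.assoc)

lemma nmul_zero_right [simp]: "nmul n 0 = 0"
  by (induct n) simp_all

lemma nmul_add_right: "nmul n (x + y) = nmul n x + nmul n y"
  by (induct n) (simp_all add: algebra_simps)

lemma nmul_minus: "nmul n (- x) = - nmul n x"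
  by (induct n) (simp_all add: algebra_simps)

lemma nmul_diff: "nmul n (x - y) = nmul n x - nmul n y"
  using nmul_add_right[of n x "- y"] nmul_minus[of n y] by simp

lemma nmul_mult: "nmul (m * n) x = nmul m (nmul n x)"
  by (induct m) (simp_all add: nmul_add_left)

lemma nmul_commute: "nmul m (nmul n x) = nmul n (nmul m x)"
  by (metis mult.commute nmul_mult)

lemma is_subgroupD:
  assumes "is_subgroup S"
  shows "0 \<in> S" "x \<in> S \<Longrightarrow> y \<in> S \<Longrightarrow> x + y \<in> S" "x \<in> S \<Longrightarrow> - x \<in> S"
  using assms unfolding is_subgroup_def by auto

lemma subgroup_diff: "is_subgroup S \<Longrightarrow> x \<in> S \<Longrightarrow> y \<in> S \<Longrightarrow> x - y \<in> S"
  by (metis diff_conv_add_uminus is_subgroupD(2,3))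

lemma subgroup_nmul: "is_subgroup S \<Longrightarrow> x \<in> S \<Longrightarrow> nmul n x \<in> S"
  by (induct n) (auto dest: is_subgroupD)

lemma is_subgroup_UNIV: "is_subgroup UNIV"
  by (simp add: is_subgroup_def)

lemma is_subgroup_zero: "is_subgroup {0}"
  by (simp add: is_subgroup_def)

lemma is_subgroup_image_nmul: "is_subgroup W \<Longrightarrow> is_subgroup (nmul n ` W)"
  unfolding is_subgroup_def
  by (auto simp: image_iff) (metis nmul_zero_right, metis nmul_add_right, metis nmul_minus)

lemma image_nmul_power_antimono:
  assumes "is_subgroup W" "j \<le> k"
  shows "nmul ((p::nat) ^ k) ` W \<subseteq> nmul (p ^ j) ` W"
proof
  fix x assume "x \<in> nmul (p ^ k) ` W"
  then obtain w where w: "w \<in> W" "x = nmul (p ^ k) w" by blast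
  have "p ^ k = p ^ j * p ^ (k - j)" using assms(2) by (simp flip: power_add)
  then have "x = nmul (p ^ j) (nmul (p ^ (k - j)) w)" using w by (simp add: nmul_mult)
  then show "x \<in> nmul (p ^ j) ` W" using assms(1) w(1) subgroup_nmul by blast
qed

lemma range_nmul_power_antimono: "j \<le> k \<Longrightarrow> range (nmul ((p::nat) ^ k)) \<subseteq> range (nmul (p ^ j))"
  using image_nmul_power_antimono[OF is_subgroup_UNIV] .

definition ann :: "nat \<Rightarrow> 'a::ab_group_add set" where
  "ann n = {x. nmul n x = 0}"

lemma is_subgroup_ann: "is_subgroup (ann n)"
  unfolding is_subgroup_def ann_def by (simp add: nmul_add_right nmul_minus)

lemma ann_power_mono:
  assumes "j \<le> k" shows "ann ((p::nat) ^ j) \<subseteq> ann (p ^ k)"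
proof
  fix x assume "x \<in> ann (p ^ j)"
  moreover have "p ^ k = p ^ (k - j) * p ^ j" using assms by (simp flip: power_add)
  ultimately show "x \<in> ann (p ^ k)" by (simp add: ann_def nmul_mult)
qed

lemma prime_power_coprime_factor:
  assumes "prime (p::nat)" "n \<noteq> 0"
  obtains v q where "n = p ^ v * q" "\<not> p dvd q"
  using multiplicity_decompose'[of n p] assms by (metis not_prime_unit)

lemma coprime_inverse_mod_prime_power:
  assumes "prime (p::nat)" "\<not> p dvd k"
  obtains k' q where "k * k' = Suc (q * p ^ j)"
proof -
  have "coprime k (p ^ j)"
    using prime_imp_coprime[OF assms] by (simp add: coprime_commute)
  moreover have "k \<noteq> 0" using assms(2) by (metis dvd_0_right)
  ultimately obtain x y where "k * x = p ^ j * y + 1"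
    using bezout_nat[of k "p ^ j"] by auto
  then show ?thesis using that[of x y] by simp
qed

lemma nmul_coprime_inverse:
  assumes "prime p" "\<not> p dvd q" "nmul (p ^ k) t = 0"
  obtains q' where "nmul q (nmul q' t) = t" "nmul q' (nmul q t) = t"
proof -
  obtain q' r where qr: "q * q' = Suc (r * p ^ k)"
    using coprime_inverse_mod_prime_power[OF assms(1,2)] by blast
  have "nmul (q * q') t = t"
    using assms(3) by (simp add: qr nmul_mult)
  then show ?thesis using that[of q'] by (metis mult.commute nmul_mult)
qed

lemma coprime_multiple_in_subgroup:
  assumes "prime p" "\<not> p dvd k" "is_subgroup S" "nmul p x \<in> S" "nmul k x \<in> S"
  shows "x \<in> S"
proof -
  obtain k' q where kq: "k * k' = Suc (q * p ^ 1)"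
    using coprime_inverse_mod_prime_power[OF assms(1,2)] by blast
  have "nmul k' (nmul k x) = nmul (k * k') x" by (metis nmul_mult mult.commute)
  also have "\<dots> = x + nmul q (nmul p x)" using kq by (simp add: nmul_mult)
  finally have "nmul k' (nmul k x) = x + nmul q (nmul p x)" .
  then have "x = nmul k' (nmul k x) - nmul q (nmul p x)" by (simp add: algebra_simps)
  then show ?thesis using assms(3-5) by (metis subgroup_diff subgroup_nmul)
qed

section \<open>The extension group of a cocycle\<close>

text \<open>A cocycle \<open>c\<close> defines the extension \<open>A \<times> T\<close> with addition
  \<open>(a, x) + (b, y) = (a + b + c (x, y), x + y)\<close>; it contains \<open>A\<close> as \<open>A \<times> {0}\<close>.\<close>

definition ext_add :: "('t::ab_group_add \<times> 't \<Rightarrow> 'a::ab_group_add) \<Rightarrow> 'a \<times> 't \<Rightarrow> 'a \<times> 't \<Rightarrow> 'a \<times> 't" where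
  "ext_add c e f = (fst e + fst f + c (snd e, snd f), snd e + snd f)"

definition ext_neg :: "('t::ab_group_add \<times> 't \<Rightarrow> 'a::ab_group_add) \<Rightarrow> 'a \<times> 't \<Rightarrow> 'a \<times> 't" where
  "ext_neg c e = (- fst e - c (snd e, - snd e), - snd e)"

primrec ext_mul :: "('t::ab_group_add \<times> 't \<Rightarrow> 'a::ab_group_add) \<Rightarrow> nat \<Rightarrow> 'a \<times> 't \<Rightarrow> 'a \<times> 't" where
  "ext_mul c 0 e = (0, 0)"
| "ext_mul c (Suc n) e = ext_add c e (ext_mul c n e)"

lemma ext_mul_zero_cocycle: "ext_mul (\<lambda>_. 0) n e = (nmul n (fst e), nmul n (snd e))"
  by (induct n) (simp_all add: ext_add_def)

locale cocycle =
  fixes c :: "'t::ab_group_add \<times> 't \<Rightarrow> 'a::ab_group_add"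
  assumes cocycle_right_zero: "c (x, 0) = 0"
    and cocycle_commute: "c (x, y) = c (y, x)"
    and cocycle_identity: "c (y, z) - c (x + y, z) + c (x, y + z) - c (x, y) = 0"
begin

abbreviation eadd (infixl "\<oplus>" 65) where "e \<oplus> f \<equiv> ext_add c e f"
abbreviation eneg ("\<ominus>") where "\<ominus> e \<equiv> ext_neg c e"
abbreviation emul where "emul n e \<equiv> ext_mul c n e"

lemma cocycle_left_zero: "c (0, x) = 0"
  using cocycle_right_zero cocycle_commute by metis

lemma snd_eadd [simp]: "snd (e \<oplus> f) = snd e + snd f" by (simp add: ext_add_def)
lemma snd_eneg [simp]: "snd (\<ominus> e) = - snd e" by (simp add: ext_neg_def)
lemma snd_emul [simp]: "snd (emul n e) = nmul n (snd e)" by (induct n) simp_all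

lemma eadd_assoc: "(e \<oplus> f) \<oplus> g = e \<oplus> (f \<oplus> g)"
  using cocycle_identity[of "snd f" "snd g" "snd e"] by (simp add: ext_add_def algebra_simps)

lemma eadd_commute: "e \<oplus> f = f \<oplus> e"
  by (simp add: ext_add_def algebra_simps cocycle_commute[of "snd e"])

lemma eadd_left_commute: "e \<oplus> (f \<oplus> g) = f \<oplus> (e \<oplus> g)"
  by (metis eadd_assoc eadd_commute)

lemmas eadd_ac = eadd_assoc eadd_commute eadd_left_commute

lemma eadd_zero_left [simp]: "(0, 0) \<oplus> e = e" by (simp add: ext_add_def cocycle_left_zero)
lemma eadd_zero_right [simp]: "e \<oplus> (0, 0) = e" by (simp add: ext_add_def cocycle_right_zero)
lemma eadd_right_neg [simp]: "e \<oplus> \<ominus> e = (0, 0)" by (simp add: ext_add_def ext_neg_def)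
lemma eadd_left_neg [simp]: "\<ominus> e \<oplus> e = (0, 0)" by (metis eadd_commute eadd_right_neg)

lemma eadd_neg_cancel_left [simp]: "e \<oplus> (\<ominus> e \<oplus> f) = f" "\<ominus> e \<oplus> (e \<oplus> f) = f"
  by (metis eadd_assoc eadd_right_neg eadd_left_neg eadd_zero_left)+

lemma eadd_left_cancel [simp]: "e \<oplus> f = e \<oplus> g \<longleftrightarrow> f = g"
  by (metis eadd_neg_cancel_left(2))

lemma eadd_eq_iff: "e \<oplus> f = g \<longleftrightarrow> f = \<ominus> e \<oplus> g"
  by (metis eadd_neg_cancel_left)

lemma eneg_eneg [simp]: "\<ominus> (\<ominus> e) = e"
  by (metis eadd_right_neg eadd_left_neg eadd_eq_iff eadd_zero_right)

lemma eneg_eadd: "\<ominus> (e \<oplus> f) = \<ominus> e \<oplus> \<ominus> f"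
proof -
  have "(e \<oplus> f) \<oplus> (\<ominus> e \<oplus> \<ominus> f) = (0, 0)"
    by (metis eadd_assoc eadd_left_commute eadd_neg_cancel_left(1) eadd_right_neg)
  then show ?thesis by (metis eadd_eq_iff eadd_zero_right)
qed

lemma eadd_kernel [simp]: "(a, 0) \<oplus> (b, 0) = (a + b, 0)" by (simp add: ext_add_def cocycle_right_zero)
lemma eadd_kernel_left: "(a, 0) \<oplus> (b, x) = (a + b, x)" by (simp add: ext_add_def cocycle_left_zero)
lemma eneg_kernel [simp]: "\<ominus> (a, 0) = (- a, 0)" by (simp add: ext_neg_def cocycle_right_zero)

lemma emul_add_left: "emul (m + n) e = emul m e \<oplus> emul n e"
  by (induct m) (simp_all add: eadd_assoc)
lemma emul_eadd: "emul n (e \<oplus> f) = emul n e \<oplus> emul n f"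
  by (induct n) (simp_all add: eadd_ac)
lemma emul_mult: "emul (m * n) e = emul m (emul n e)"
  by (induct m) (simp_all add: emul_add_left emul_eadd)
lemma emul_eneg: "emul n (\<ominus> e) = \<ominus> (emul n e)"
  by (induct n) (simp_all add: eneg_eadd)
lemma emul_kernel [simp]: "emul n (a, 0) = (nmul n a, 0)"
  by (induct n) simp_all

lemma emul_commute: "emul m (emul n e) = emul n (emul m e)"
  by (metis emul_mult mult.commute)

end

lemma cocycles_imp_cocycle: "c \<in> cocycles \<Longrightarrow> cocycle c"
  unfolding cocycles_def cocycle_def by blast

lemma cocycle_zero: "cocycle (\<lambda>_. 0)"
  by (simp add: cocycle_def)

definition hom_lift :: "('t::ab_group_add \<times> 't \<Rightarrow> 'a::ab_group_add) \<Rightarrow> 't set \<Rightarrow> ('t \<Rightarrow> 'a \<times> 't) \<Rightarrow> bool" where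
  "hom_lift c S \<sigma> \<longleftrightarrow> (\<forall>v\<in>S. snd (\<sigma> v) = v) \<and> (\<forall>u\<in>S. \<forall>v\<in>S. \<sigma> (u + v) = ext_add c (\<sigma> u) (\<sigma> v))"

context cocycle begin

lemma hom_lift_snd: "hom_lift c S \<sigma> \<Longrightarrow> v \<in> S \<Longrightarrow> snd (\<sigma> v) = v"
  unfolding hom_lift_def by blast

lemma hom_lift_add: "hom_lift c S \<sigma> \<Longrightarrow> u \<in> S \<Longrightarrow> v \<in> S \<Longrightarrow> \<sigma> (u + v) = \<sigma> u \<oplus> \<sigma> v"
  unfolding hom_lift_def by blast

lemma hom_lift_zero: "hom_lift c S \<sigma> \<Longrightarrow> is_subgroup S \<Longrightarrow> \<sigma> 0 = (0, 0)"
  using hom_lift_add[of S \<sigma> 0 0] is_subgroupD(1)[of S]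
  by (metis add_0 eadd_zero_right eadd_left_cancel)

lemma hom_lift_nmul:
  assumes "hom_lift c S \<sigma>" "is_subgroup S" "v \<in> S"
  shows "\<sigma> (nmul n v) = emul n (\<sigma> v)"
proof (induct n)
  case 0 then show ?case using hom_lift_zero[OF assms(1,2)] by simp
next
  case (Suc n)
  have "nmul n v \<in> S" using assms(2,3) subgroup_nmul by blast
  then show ?case using Suc hom_lift_add[OF assms(1,3)] by simp
qed

lemma hom_lift_minus: "hom_lift c S \<sigma> \<Longrightarrow> is_subgroup S \<Longrightarrow> v \<in> S \<Longrightarrow> \<sigma> (- v) = \<ominus> (\<sigma> v)"
  using hom_lift_add[of S \<sigma> v "- v"] hom_lift_zero[of S \<sigma>] is_subgroupD(3)[of S v]
  by (metis add.right_inverse eadd_eq_iff eadd_zero_right)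

lemma hom_lift_UNIV_imp_coboundary:
  assumes "hom_lift c UNIV \<sigma>"
  shows "c \<in> coboundaries"
proof -
  define \<phi> where "\<phi> v = - fst (\<sigma> v)" for v
  have "\<phi> 0 = 0" using hom_lift_zero[OF assms is_subgroup_UNIV] by (simp add: \<phi>_def)
  moreover have "c (x, y) = \<phi> y - \<phi> (x + y) + \<phi> x" for x y
    using hom_lift_add[OF assms, of x y] hom_lift_snd[OF assms]
    by (simp add: \<phi>_def ext_add_def algebra_simps)
  ultimately show ?thesis unfolding coboundaries_def by blast
qed

end

section \<open>Extending lifts one cyclic step at a time\<close>

definition adjoin :: "'t::ab_group_add set \<Rightarrow> 't \<Rightarrow> 't set" where
  "adjoin S x = {v + nmul i x | v i. v \<in> S}"

lemma adjoinI: "v \<in> S \<Longrightarrow> v + nmul i x \<in> adjoin S x"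
  unfolding adjoin_def by blast

lemma adjoinE:
  assumes "u \<in> adjoin S x"
  obtains v i where "v \<in> S" "u = v + nmul i x"
  using assms unfolding adjoin_def by blast

lemma subset_adjoin: "is_subgroup S \<Longrightarrow> S \<subseteq> adjoin S x"
  using adjoinI[of _ S 0 x] by auto

lemma mem_adjoin_self: "is_subgroup S \<Longrightarrow> x \<in> adjoin S x"
  using adjoinI[OF is_subgroupD(1), of S 1 x] by simp

lemma adjoin_subset:
  assumes "is_subgroup W" "S \<subseteq> W" "x \<in> W"
  shows "adjoin S x \<subseteq> W"
proof
  fix u assume "u \<in> adjoin S x"
  then obtain v i where "v \<in> S" "u = v + nmul i x" by (rule adjoinE)
  then show "u \<in> W" using assms by (metis is_subgroupD(2) subgroup_nmul subsetD)
qed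

lemma adjoin_coset_eq:
  assumes "is_subgroup S" "x' - x \<in> S"
  shows "adjoin S x' = adjoin S x"
proof -
  have "adjoin S y \<subseteq> adjoin S z" if "y - z \<in> S" for y z
  proof
    fix u assume "u \<in> adjoin S y"
    then obtain v i where "v \<in> S" "u = v + nmul i y" by (rule adjoinE)
    moreover have "v + nmul i (y - z) \<in> S"
      using assms(1) that \<open>v \<in> S\<close> by (simp add: is_subgroupD(2) subgroup_nmul)
    ultimately have "u = (v + nmul i (y - z)) + nmul i z" "v + nmul i (y - z) \<in> S"
      by (simp_all add: nmul_diff)
    then show "u \<in> adjoin S z" by (metis adjoinI)
  qed
  moreover have "x - x' \<in> S" using assms by (metis is_subgroupD(3) minus_diff_eq)
  ultimately show ?thesis using assms(2) by blast
qed

lemma adjoin_reduce_mod: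
  assumes "is_subgroup S" "nmul p x \<in> S" "p > 0" "v \<in> S"
  obtains v' where "v' \<in> S" "v + nmul i x = v' + nmul (i mod p) x"
proof -
  have "nmul i x = nmul (i div p) (nmul p x) + nmul (i mod p) x"
    by (metis div_mult_mod_eq nmul_add_left nmul_mult mult.commute)
  then show ?thesis
    using that[of "v + nmul (i div p) (nmul p x)"] assms
    by (simp add: add.assoc is_subgroupD(2) subgroup_nmul)
qed

lemma is_subgroup_adjoin:
  assumes S: "is_subgroup S" and px: "nmul p x \<in> S" and p: "p > 0"
  shows "is_subgroup (adjoin S x)"
  unfolding is_subgroup_def
proof (intro conjI ballI)
  show "0 \<in> adjoin S x" using subset_adjoin[OF S] is_subgroupD(1)[OF S] by blast
next
  fix a b assume "a \<in> adjoin S x" "b \<in> adjoin S x"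
  then obtain v i v' i' where "v \<in> S" "a = v + nmul i x" "v' \<in> S" "b = v' + nmul i' x"
    by (metis adjoinE)
  then have "a + b = (v + v') + nmul (i + i') x" "v + v' \<in> S"
    using S by (simp_all add: nmul_add_left algebra_simps is_subgroupD(2))
  then show "a + b \<in> adjoin S x" by (metis adjoinI)
next
  fix a assume "a \<in> adjoin S x"
  then obtain v i where v: "v \<in> S" "a = v + nmul i x" by (rule adjoinE)
  have "i * p = i * (p - 1) + i" using p by (cases p) simp_all
  then have "nmul (i * p) x = nmul (i * (p - 1)) x + nmul i x" by (metis nmul_add_left)
  then have "- a = (- v - nmul i (nmul p x)) + nmul (i * (p - 1)) x"
    using v by (simp add: nmul_mult algebra_simps)
  moreover have "- v - nmul i (nmul p x) \<in> S"
    using S v(1) px by (meson is_subgroupD(3) subgroup_diff subgroup_nmul)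
  ultimately show "- a \<in> adjoin S x" by (metis adjoinI)
qed

lemma finite_adjoin:
  assumes S: "finite S" "is_subgroup S" and px: "nmul p x \<in> S" and p: "p > 0"
  shows "finite (adjoin S x)"
proof -
  have "adjoin S x \<subseteq> (\<lambda>(v, i). v + nmul i x) ` (S \<times> {..<p})"
  proof
    fix a assume "a \<in> adjoin S x"
    then obtain v i where "v \<in> S" "a = v + nmul i x" by (rule adjoinE)
    then obtain v' where "v' \<in> S" "a = v' + nmul (i mod p) x"
      using adjoin_reduce_mod[OF S(2) px p] by metis
    then show "a \<in> (\<lambda>(v, i). v + nmul i x) ` (S \<times> {..<p})" using p by force
  qed
  then show ?thesis using finite_subset S(1) by blast
qed

context cocycle begin

text \<open>A lift over \<open>S\<close> extends to \<open>S + \<langle>x\<rangle>\<close> by sending \<open>x\<close> to any \<open>e\<close> over \<open>x\<close>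
  with \<open>p e = \<sigma> (p x)\<close>; as \<open>p\<close> is prime, \<open>p x\<close> generates \<open>S \<inter> \<langle>x\<rangle>\<close>.\<close>

lemma adjoin_lift_well_defined:
  assumes S: "is_subgroup S" "hom_lift c S \<sigma>" and x: "x \<notin> S" "nmul p x \<in> S" "prime p"
    and e: "emul p e = \<sigma> (nmul p x)"
    and v: "v \<in> S" "v' \<in> S" "v + nmul (k + i) x = v' + nmul i x"
  shows "\<sigma> v \<oplus> emul (k + i) e = \<sigma> v' \<oplus> emul i e"
proof -
  have kx: "nmul k x = v' - v" using v(3) by (simp add: nmul_add_left algebra_simps)
  then have "nmul k x \<in> S" using S(1) v by (simp add: subgroup_diff)
  then have "p dvd k" using coprime_multiple_in_subgroup[OF x(3) _ S(1) x(2)] x(1) by blast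
  then obtain q where q: "k = q * p" by (metis dvd_def mult.commute)
  have "emul k e = \<sigma> (nmul q (nmul p x))"
    using hom_lift_nmul[OF S(2,1) x(2)] by (simp add: q emul_mult e)
  also have "\<dots> = \<sigma> (v' - v)" using kx q by (simp add: nmul_mult)
  finally have "emul k e = \<sigma> (v' - v)" .
  moreover have "\<sigma> v \<oplus> \<sigma> (v' - v) = \<sigma> v'"
    using hom_lift_add[OF S(2) v(1), of "v' - v"] S(1) v by (simp add: subgroup_diff)
  ultimately show ?thesis by (metis emul_add_left eadd_assoc)
qed

lemma hom_lift_adjoin:
  assumes S: "is_subgroup S" "hom_lift c S \<sigma>" and x: "x \<notin> S" "nmul p x \<in> S" "prime p"
    and e: "snd e = x" "emul p e = \<sigma> (nmul p x)"
  obtains \<sigma>' where "hom_lift c (adjoin S x) \<sigma>'" "\<forall>v\<in>S. \<sigma>' v = \<sigma> v"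
    "\<forall>v\<in>S. \<forall>i. \<sigma>' (v + nmul i x) = \<sigma> v \<oplus> emul i e"
proof -
  have wd: "\<sigma> v \<oplus> emul i e = \<sigma> v' \<oplus> emul i' e"
    if "v \<in> S" "v' \<in> S" "v + nmul i x = v' + nmul i' x" for v v' i i'
  proof (cases "i' \<le> i")
    case True
    then show ?thesis
      using adjoin_lift_well_defined[OF S x e(2), of v v' "i - i'" i'] that by simp
  next
    case False
    then show ?thesis
      using adjoin_lift_well_defined[OF S x e(2), of v' v "i' - i" i] that by simp
  qed
  define \<sigma>' where "\<sigma>' u = (SOME f. \<exists>v i. v \<in> S \<and> u = v + nmul i x \<and> f = \<sigma> v \<oplus> emul i e)" for u
  have val: "\<sigma>' (v + nmul i x) = \<sigma> v \<oplus> emul i e" if "v \<in> S" for v i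
  proof -
    have "\<exists>v' i'. v' \<in> S \<and> v + nmul i x = v' + nmul i' x \<and> \<sigma>' (v + nmul i x) = \<sigma> v' \<oplus> emul i' e"
      unfolding \<sigma>'_def by (rule someI_ex) (use that in blast)
    then show ?thesis using wd that by metis
  qed
  have "hom_lift c (adjoin S x) \<sigma>'"
    unfolding hom_lift_def
  proof (intro conjI ballI)
    fix u assume "u \<in> adjoin S x"
    then obtain v i where "v \<in> S" "u = v + nmul i x" by (rule adjoinE)
    then show "snd (\<sigma>' u) = u" using val hom_lift_snd[OF S(2)] e(1) by simp
  next
    fix u w assume "u \<in> adjoin S x" "w \<in> adjoin S x"
    then obtain v i v' i' where v: "v \<in> S" "u = v + nmul i x" "v' \<in> S" "w = v' + nmul i' x"
      by (metis adjoinE)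
    have "u + w = (v + v') + nmul (i + i') x" using v by (simp add: nmul_add_left algebra_simps)
    then have "\<sigma>' (u + w) = \<sigma> (v + v') \<oplus> emul (i + i') e"
      using val is_subgroupD(2)[OF S(1) v(1) v(3)] by simp
    also have "\<dots> = (\<sigma> v \<oplus> emul i e) \<oplus> (\<sigma> v' \<oplus> emul i' e)"
      using hom_lift_add[OF S(2) v(1) v(3)] by (simp add: emul_add_left eadd_ac)
    finally show "\<sigma>' (u + w) = \<sigma>' u \<oplus> \<sigma>' w" using val v by simp
  qed
  moreover have "\<forall>v\<in>S. \<sigma>' v = \<sigma> v" using val[of _ 0] by simp
  ultimately show ?thesis using that val by blast
qed

end

lemma adjoin_until_member:
  fixes Q :: "'t::ab_group_add set \<Rightarrow> ('t \<Rightarrow> 'e) \<Rightarrow> bool"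
  assumes W: "is_subgroup W"
    and QS: "\<And>S \<sigma>. Q S \<sigma> \<Longrightarrow> is_subgroup S \<and> S \<subseteq> W"
    and step: "\<And>S \<sigma> x. Q S \<sigma> \<Longrightarrow> x \<in> W \<Longrightarrow> x \<notin> S \<Longrightarrow> nmul p x \<in> S \<Longrightarrow>
        \<exists>\<sigma>'. Q (adjoin S x) \<sigma>' \<and> (\<forall>v\<in>S. \<sigma>' v = \<sigma> v)"
    and t: "t \<in> W" "nmul (p ^ k) t = 0"
    and Q: "Q S \<sigma>"
  shows "\<exists>S' \<sigma>'. Q S' \<sigma>' \<and> S \<subseteq> S' \<and> t \<in> S' \<and> (\<forall>v\<in>S. \<sigma>' v = \<sigma> v)"
proof -
  have "nmul (p ^ r) t \<in> S \<Longrightarrow> Q S \<sigma> \<Longrightarrow>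
      \<exists>S' \<sigma>'. Q S' \<sigma>' \<and> S \<subseteq> S' \<and> t \<in> S' \<and> (\<forall>v\<in>S. \<sigma>' v = \<sigma> v)" for r S \<sigma>
  proof (induct r arbitrary: S \<sigma>)
    case 0
    then show ?case by auto
  next
    case (Suc r)
    define x where "x = nmul (p ^ r) t"
    show ?case
    proof (cases "x \<in> S")
      case True
      then show ?thesis using Suc(1)[of S \<sigma>] Suc(3) by (simp add: x_def)
    next
      case False
      have "nmul p x \<in> S" using Suc(2) by (simp add: x_def flip: nmul_mult)
      moreover have "x \<in> W" using W t(1) by (simp add: x_def subgroup_nmul)
      ultimately obtain \<sigma>1 where \<sigma>1: "Q (adjoin S x) \<sigma>1" "\<forall>v\<in>S. \<sigma>1 v = \<sigma> v"
        using step[OF Suc(3) _ False] by blast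
      have sg: "is_subgroup S" using QS Suc(3) by blast
      obtain S' \<sigma>' where "Q S' \<sigma>'" "adjoin S x \<subseteq> S'" "t \<in> S'" "\<forall>v\<in>adjoin S x. \<sigma>' v = \<sigma>1 v"
        using Suc(1)[of "adjoin S x" \<sigma>1] \<sigma>1(1) mem_adjoin_self[OF sg] by (auto simp: x_def)
      moreover have "S \<subseteq> adjoin S x" by (rule subset_adjoin[OF sg])
      ultimately show ?thesis using \<sigma>1(2) by (intro exI[of _ S'] exI[of _ \<sigma>']) auto
    qed
  qed
  moreover have "0 \<in> S" using QS[OF Q] is_subgroupD(1) by blast
  ultimately show ?thesis using t(2) Q by metis
qed

lemma exists_exhausting_stages:
  fixes Q :: "'t::countable set \<Rightarrow> ('t \<Rightarrow> 'e) \<Rightarrow> bool"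
  assumes Q0: "Q S0 \<sigma>0"
    and grow: "\<And>S \<sigma> t. Q S \<sigma> \<Longrightarrow> t \<in> W \<Longrightarrow>
      \<exists>S' \<sigma>'. Q S' \<sigma>' \<and> S \<subseteq> S' \<and> t \<in> S' \<and> (\<forall>v\<in>S. \<sigma>' v = \<sigma> v)"
  obtains stage :: "nat \<Rightarrow> 't set \<times> ('t \<Rightarrow> 'e)"
  where "stage 0 = (S0, \<sigma>0)" "\<And>n. Q (fst (stage n)) (snd (stage n))"
    "\<And>m n v. m \<le> n \<Longrightarrow> v \<in> fst (stage m) \<Longrightarrow> v \<in> fst (stage n) \<and> snd (stage n) v = snd (stage m) v"
    "\<And>v. v \<in> W \<Longrightarrow> v \<in> fst (stage (Suc (to_nat v)))"
proof -
  define next_stage where "next_stage X t = (if t \<in> W then (SOME X'. Q (fst X') (snd X') \<and>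
      fst X \<subseteq> fst X' \<and> t \<in> fst X' \<and> (\<forall>v\<in>fst X. snd X' v = snd X v)) else X)" for X t
  have next_stage: "Q (fst (next_stage X t)) (snd (next_stage X t)) \<and> fst X \<subseteq> fst (next_stage X t) \<and>
      (t \<in> W \<longrightarrow> t \<in> fst (next_stage X t)) \<and> (\<forall>v\<in>fst X. snd (next_stage X t) v = snd X v)"
    if Q: "Q (fst X) (snd X)" for X t
  proof (cases "t \<in> W")
    case True
    then have "\<exists>X'. Q (fst X') (snd X') \<and> fst X \<subseteq> fst X' \<and> t \<in> fst X' \<and>
        (\<forall>v\<in>fst X. snd X' v = snd X v)"
      using grow[OF Q] by (metis fst_conv snd_conv)
    from someI_ex[OF this] show ?thesis using True by (simp add: next_stage_def)
  qed (simp add: next_stage_def Q)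
  define stage where "stage = rec_nat (S0, \<sigma>0) (\<lambda>n X. next_stage X (from_nat n))"
  have stage_0: "stage 0 = (S0, \<sigma>0)"
    by (simp add: stage_def)
  have stage_Suc: "stage (Suc n) = next_stage (stage n) (from_nat n)" for n
    by (simp add: stage_def)
  have Q_stage: "Q (fst (stage n)) (snd (stage n))" for n
    by (induct n) (simp_all add: stage_0 stage_Suc Q0 next_stage)
  have stage_mono: "fst (stage m) \<subseteq> fst (stage n) \<and> (\<forall>v\<in>fst (stage m). snd (stage n) v = snd (stage m) v)"
    if "m \<le> n" for m n
    using that
  proof (induct n)
    case (Suc n)
    show ?case
    proof (cases "m \<le> n")
      case True
      then have "fst (stage m) \<subseteq> fst (stage n)" "\<forall>v\<in>fst (stage m). snd (stage n) v = snd (stage m) v"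
        using Suc.hyps by auto
      with next_stage[OF Q_stage[of n], of "from_nat n"] show ?thesis by (force simp: stage_Suc)
    qed (use Suc.prems le_Suc_eq in auto)
  qed simp
  have "v \<in> fst (stage (Suc (to_nat v)))" if "v \<in> W" for v
    using next_stage[OF Q_stage[of "to_nat v"], of v] that by (simp add: stage_Suc)
  then show ?thesis using that stage_0 Q_stage stage_mono by blast
qed

lemma hom_lift_exhaustion:
  fixes Q :: "'t::{ab_group_add,countable} set \<Rightarrow> ('t \<Rightarrow> 'a::ab_group_add \<times> 't) \<Rightarrow> bool"
  assumes W: "is_subgroup W" and tors: "\<forall>t::'t. \<exists>k. nmul (p ^ k) t = 0"
    and Q0: "Q S0 \<sigma>0"
    and QS: "\<And>S \<sigma>. Q S \<sigma> \<Longrightarrow> is_subgroup S \<and> S \<subseteq> W \<and> hom_lift c S \<sigma>"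
    and step: "\<And>S \<sigma> x. Q S \<sigma> \<Longrightarrow> x \<in> W \<Longrightarrow> x \<notin> S \<Longrightarrow> nmul p x \<in> S \<Longrightarrow>
        \<exists>\<sigma>'. Q (adjoin S x) \<sigma>' \<and> (\<forall>v\<in>S. \<sigma>' v = \<sigma> v)"
  obtains \<sigma> where "\<forall>v\<in>S0. \<sigma> v = \<sigma>0 v" "hom_lift c W \<sigma>"
proof -
  have QS': "\<And>S \<sigma>. Q S \<sigma> \<Longrightarrow> is_subgroup S \<and> S \<subseteq> W" using QS by blast
  have grow: "\<exists>S' \<sigma>'. Q S' \<sigma>' \<and> S \<subseteq> S' \<and> t \<in> S' \<and> (\<forall>v\<in>S. \<sigma>' v = \<sigma> v)"
    if Q: "Q S \<sigma>" and t: "t \<in> W" for S \<sigma> t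
  proof -
    obtain k where k: "nmul (p ^ k) t = 0" using tors by blast
    show ?thesis
      by (rule adjoin_until_member[where Q = Q and p = p]) (use W QS' step t k Q in blast)+
  qed
  obtain stage :: "nat \<Rightarrow> 't set \<times> ('t \<Rightarrow> 'a \<times> 't)" where stage: "stage 0 = (S0, \<sigma>0)"
    "\<And>n. Q (fst (stage n)) (snd (stage n))"
    "\<And>m n v. m \<le> n \<Longrightarrow> v \<in> fst (stage m) \<Longrightarrow> v \<in> fst (stage n) \<and> snd (stage n) v = snd (stage m) v"
    "\<And>v. v \<in> W \<Longrightarrow> v \<in> fst (stage (Suc (to_nat v)))"
    using exists_exhausting_stages[of Q S0 \<sigma>0 W, OF Q0 grow] by blast
  define \<sigma> where "\<sigma> v = snd (stage (Suc (to_nat v))) v" for v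
  have at_stage: "v \<in> fst (stage n) \<and> \<sigma> v = snd (stage n) v" if "v \<in> W" "Suc (to_nat v) \<le> n" for v n
    using stage(3)[OF that(2) stage(4)[OF that(1)]] by (simp add: \<sigma>_def)
  have "hom_lift c W \<sigma>"
    unfolding hom_lift_def
  proof (intro conjI ballI)
    fix v assume "v \<in> W"
    then show "snd (\<sigma> v) = v"
      using at_stage[of v] QS[OF stage(2)] hom_lift_def by (metis order_refl)
  next
    fix u v assume uv: "u \<in> W" "v \<in> W"
    define n where "n = Suc (to_nat u) + Suc (to_nat v) + Suc (to_nat (u + v))"
    have "u + v \<in> W" using uv W by (simp add: is_subgroupD(2))
    then have "u \<in> fst (stage n)" "v \<in> fst (stage n)"
      "\<sigma> u = snd (stage n) u" "\<sigma> v = snd (stage n) v" "\<sigma> (u + v) = snd (stage n) (u + v)"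
      using at_stage[of _ n] uv by (simp_all add: n_def)
    then show "\<sigma> (u + v) = ext_add c (\<sigma> u) (\<sigma> v)"
      using QS[OF stage(2)[of n]] unfolding hom_lift_def by simp
  qed
  moreover have "\<sigma> v = \<sigma>0 v" if "v \<in> S0" for v
    using stage(3)[of 0 "Suc (to_nat v)" v] stage(1) that by (simp add: \<sigma>_def)
  ultimately show ?thesis using that by blast
qed

section \<open>Lifting a group without elements of infinite height\<close>

text \<open>For \<open>W \<subseteq> T\<close>, \<open>E\<^sub>W = {e. snd e \<in> W}\<close> is the preimage of \<open>W\<close> in the extension, and
  \<open>ext_multiples c n W\<close> is \<open>n E\<^sub>W\<close>. Heights are always taken relative to \<open>W\<close>.\<close>

definition ext_multiples :: "('t::ab_group_add \<times> 't \<Rightarrow> 'a::ab_group_add) \<Rightarrow> nat \<Rightarrow> 't set \<Rightarrow> ('a \<times> 't) set" where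
  "ext_multiples c n W = {ext_mul c n e | e. snd e \<in> W}"

definition pure_on :: "('t::ab_group_add \<times> 't \<Rightarrow> 'a::ab_group_add) \<Rightarrow> nat \<Rightarrow> 't set \<Rightarrow> bool" where
  "pure_on c p W \<longleftrightarrow> (\<forall>a j. (a, 0) \<in> ext_multiples c (p ^ j) W \<longrightarrow> a \<in> range (nmul (p ^ j)))"

definition height_preserving ::
    "('t::ab_group_add \<times> 't \<Rightarrow> 'a::ab_group_add) \<Rightarrow> nat \<Rightarrow> 't set \<Rightarrow> 't set \<Rightarrow> ('t \<Rightarrow> 'a \<times> 't) \<Rightarrow> bool" where
  "height_preserving c p W S \<sigma> \<longleftrightarrow>
     (\<forall>v\<in>S. \<forall>j. v \<in> nmul (p ^ j) ` W \<longrightarrow> \<sigma> v \<in> ext_multiples c (p ^ j) W)"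

context cocycle begin

lemma ext_multiplesI: "snd e \<in> W \<Longrightarrow> emul n e \<in> ext_multiples c n W"
  unfolding ext_multiples_def by blast

lemma zero_mem_ext_multiples: "is_subgroup W \<Longrightarrow> (0, 0) \<in> ext_multiples c n W"
  using ext_multiplesI[of "(0, 0)" W n] by (simp add: is_subgroupD(1))

lemma ext_multiples_eadd:
  assumes "e \<in> ext_multiples c n W" "f \<in> ext_multiples c n W" "is_subgroup W"
  shows "e \<oplus> f \<in> ext_multiples c n W"
proof -
  obtain e' f' where "snd e' \<in> W" "snd f' \<in> W" "e = emul n e'" "f = emul n f'"
    using assms(1,2) unfolding ext_multiples_def by blast
  then show ?thesis
    using ext_multiplesI[of "e' \<oplus> f'" W n] assms(3) by (simp add: emul_eadd is_subgroupD(2))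
qed

lemma ext_multiples_eneg:
  assumes "e \<in> ext_multiples c n W" "is_subgroup W"
  shows "\<ominus> e \<in> ext_multiples c n W"
proof -
  obtain e' where "snd e' \<in> W" "e = emul n e'"
    using assms(1) unfolding ext_multiples_def by blast
  then show ?thesis
    using ext_multiplesI[of "\<ominus> e'" W n] assms(2) by (simp add: emul_eneg is_subgroupD(3))
qed

lemma ext_multiples_emul:
  assumes "e \<in> ext_multiples c n W" "is_subgroup W"
  shows "emul k e \<in> ext_multiples c n W"
proof -
  obtain e' where "snd e' \<in> W" "e = emul n e'"
    using assms(1) unfolding ext_multiples_def by blast
  then show ?thesis
    using ext_multiplesI[of "emul k e'" W n] assms(2) by (simp add: emul_commute subgroup_nmul)
qed

lemma ext_multiples_power_antimono:
  assumes "j \<le> k" "is_subgroup W"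
  shows "ext_multiples c (p ^ k) W \<subseteq> ext_multiples c (p ^ j) W"
proof
  fix f assume "f \<in> ext_multiples c (p ^ k) W"
  then obtain e where e: "snd e \<in> W" "f = emul (p ^ k) e" unfolding ext_multiples_def by blast
  have "p ^ k = p ^ j * p ^ (k - j)" using assms(1) by (simp flip: power_add)
  then have "f = emul (p ^ j) (emul (p ^ (k - j)) e)" using e by (simp add: emul_mult)
  then show "f \<in> ext_multiples c (p ^ j) W"
    using ext_multiplesI[of "emul (p ^ (k - j)) e" W] assms(2) e(1) by (simp add: subgroup_nmul)
qed

text \<open>Purity lets us correct a lift of \<open>x = p\<^sup>H w\<close> by an element of \<open>A\<close> so that it becomes a
  \<open>p\<close>-th root of a prescribed element \<open>s\<close> of height \<open>H + 1\<close> over \<open>p x\<close>, keeping height \<open>H\<close>.\<close>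

lemma pure_root_with_height:
  assumes W: "is_subgroup W" and pure: "pure_on c p W"
    and w: "w \<in> W" and x: "x = nmul (p ^ H) w"
    and s: "snd s = nmul p x" "s \<in> ext_multiples c (p ^ Suc H) W"
  obtains e where "snd e = x" "emul p e = s" "e \<in> ext_multiples c (p ^ H) W"
proof -
  define e1 where "e1 = emul (p ^ H) (0, w)"
  have e1: "snd e1 = x" "e1 \<in> ext_multiples c (p ^ H) W"
    using x w ext_multiplesI[of "(0, w)" W] by (simp_all add: e1_def)
  have pe1: "emul p e1 = emul (p ^ Suc H) (0, w)" by (simp add: e1_def flip: emul_mult)
  define d where "d = emul p e1 \<oplus> \<ominus> s"
  have "snd d = 0" using e1(1) s(1) by (simp add: d_def)
  moreover have "d \<in> ext_multiples c (p ^ Suc H) W"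
    unfolding d_def pe1 using ext_multiplesI[of "(0, w)" W] w s(2) W
    by (simp add: ext_multiples_eadd ext_multiples_eneg)
  ultimately obtain a where a: "d = (nmul (p ^ Suc H) a, 0)"
    using pure unfolding pure_on_def by (metis prod.collapse rangeE)
  define e where "e = e1 \<oplus> \<ominus> (nmul (p ^ H) a, 0)"
  have "emul p e = emul p e1 \<oplus> \<ominus> (nmul (p ^ Suc H) a, 0)"
    by (simp add: e_def emul_eadd emul_eneg nmul_mult nmul_minus)
  also have "\<dots> = emul p e1 \<oplus> \<ominus> d" using a by (simp add: nmul_mult)
  also have "\<dots> = s" unfolding d_def by (simp add: eneg_eadd)
  finally have "emul p e = s" .
  moreover have "e \<in> ext_multiples c (p ^ H) W"
    unfolding e_def
    by (rule ext_multiples_eadd[OF e1(2) ext_multiples_eneg[OF _ W] W])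
      (use ext_multiplesI[of "(a, 0)" W "p ^ H"] is_subgroupD(1)[OF W] in simp)
  moreover have "snd e = x" using e1(1) by (simp add: e_def)
  ultimately show ?thesis using that by blast
qed

end

lemma max_height_in_coset:
  assumes W: "is_subgroup W" and S: "finite S" "is_subgroup S" "S \<subseteq> W"
    and x: "x \<in> W" "x \<notin> S"
    and no_inf: "\<forall>w\<in>W. w \<noteq> 0 \<longrightarrow> (\<exists>j. w \<notin> nmul ((p::nat) ^ j) ` W)"
  obtains x' H where "x' - x \<in> S" "x' \<in> nmul (p ^ H) ` W"
    "\<forall>v\<in>S. \<forall>j. x' + v \<in> nmul (p ^ j) ` W \<longrightarrow> j \<le> H"
proof -
  define X where "X = (\<lambda>v. x + v) ` S"
  have X: "finite X" "X \<subseteq> W" using S x(1) W by (auto simp: X_def is_subgroupD(2))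
  have X0: "0 \<notin> X"
  proof
    assume "0 \<in> X"
    then obtain v where "v \<in> S" "x = - v" by (auto simp: X_def add_eq_0_iff2)
    then show False using x(2) S(2) is_subgroupD(3) by blast
  qed
  have "\<exists>B. \<forall>j. w \<in> nmul (p ^ j) ` W \<longrightarrow> j < B" if w: "w \<in> X" for w
  proof -
    have "w \<in> W" "w \<noteq> 0" using w X(2) X0 by auto
    then obtain B where B: "w \<notin> nmul (p ^ B) ` W" using no_inf by blast
    have "j < B" if "w \<in> nmul (p ^ j) ` W" for j
    proof (rule ccontr)
      assume "\<not> j < B"
      then have "nmul (p ^ j) ` W \<subseteq> nmul (p ^ B) ` W" using image_nmul_power_antimono[OF W] by simp
      then show False using that B by blast
    qed
    then show ?thesis by blast
  qed
  then obtain B where B: "\<And>w j. w \<in> X \<Longrightarrow> w \<in> nmul (p ^ j) ` W \<Longrightarrow> j < B w" by metis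
  define heights where "heights = {j. \<exists>w\<in>X. w \<in> nmul (p ^ j) ` W}"
  have "heights \<subseteq> {..<Max (B ` X)}"
  proof
    fix j assume "j \<in> heights"
    then obtain w where "w \<in> X" "w \<in> nmul (p ^ j) ` W" by (auto simp: heights_def)
    then have "j < B w" "B w \<le> Max (B ` X)" using B X(1) by auto
    then show "j \<in> {..<Max (B ` X)}" by simp
  qed
  then have "finite heights" by (rule finite_subset) simp
  moreover have "0 \<in> heights"
  proof -
    have "x \<in> X" using S(2) is_subgroupD(1) by (force simp: X_def)
    then show ?thesis using X(2) by (auto simp: heights_def)
  qed
  ultimately have "Max heights \<in> heights" using Max_in by blast
  then obtain x' where x': "x' \<in> X" "x' \<in> nmul (p ^ Max heights) ` W" by (auto simp: heights_def)
  then obtain v0 where v0: "v0 \<in> S" "x' = x + v0" by (auto simp: X_def)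
  have "j \<le> Max heights" if "v \<in> S" "x' + v \<in> nmul (p ^ j) ` W" for v j
  proof -
    have "x' + v \<in> X" using that(1) v0 S(2) by (auto simp: X_def add.assoc is_subgroupD(2))
    then have "j \<in> heights" using that(2) by (auto simp: heights_def)
    then show ?thesis using \<open>finite heights\<close> by simp
  qed
  then show ?thesis using that[of x' "Max heights"] x'(2) v0 by simp
qed

context cocycle begin

lemma height_preserving_adjoin:
  assumes W: "is_subgroup W" and pr: "prime p"
    and S: "is_subgroup S" "height_preserving c p W S \<sigma>"
    and x: "x \<in> nmul (p ^ H) ` W" "nmul p x \<in> S"
    and max: "\<forall>v\<in>S. \<forall>j. x + v \<in> nmul (p ^ j) ` W \<longrightarrow> j \<le> H"
    and e: "e \<in> ext_multiples c (p ^ H) W"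
    and \<sigma>': "\<forall>v\<in>S. \<sigma>' v = \<sigma> v" "\<forall>v\<in>S. \<forall>i. \<sigma>' (v + nmul i x) = \<sigma> v \<oplus> emul i e"
  shows "height_preserving c p W (adjoin S x) \<sigma>'"
  unfolding height_preserving_def
proof (intro ballI allI impI)
  fix u j assume u: "u \<in> adjoin S x" and uj: "u \<in> nmul (p ^ j) ` W"
  obtain v i where v: "v \<in> S" "u = v + nmul i x" using u by (rule adjoinE)
  have Wj: "is_subgroup (nmul (p ^ j) ` W)" by (rule is_subgroup_image_nmul[OF W])
  show "\<sigma>' u \<in> ext_multiples c (p ^ j) W"
  proof (cases "p dvd i")
    case True
    then obtain q where "i = q * p" by (metis dvd_def mult.commute)
    then have "u \<in> S" using v x(2) S(1) by (simp add: nmul_mult is_subgroupD(2) subgroup_nmul)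
    then show ?thesis using \<sigma>'(1) S(2) uj unfolding height_preserving_def by simp
  next
    case False
    obtain i' q where iq: "i * i' = Suc (q * p ^ 1)"
      using coprime_inverse_mod_prime_power[OF pr False] by blast
    have "nmul i' u = x + (nmul i' v + nmul q (nmul p x))"
      using v iq by (simp add: nmul_add_right algebra_simps flip: nmul_mult)
    moreover have "nmul i' u \<in> nmul (p ^ j) ` W" using uj Wj subgroup_nmul by blast
    moreover have "nmul i' v + nmul q (nmul p x) \<in> S"
      using v(1) x(2) S(1) by (simp add: is_subgroupD(2) subgroup_nmul)
    ultimately have "j \<le> H" using max by metis
    then have xj: "x \<in> nmul (p ^ j) ` W" using x(1) image_nmul_power_antimono[OF W] by blast
    have "v = u - nmul i x" using v by simp
    then have "v \<in> nmul (p ^ j) ` W" using uj xj Wj by (metis subgroup_diff subgroup_nmul)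
    then have "\<sigma> v \<in> ext_multiples c (p ^ j) W" using S(2) v(1) unfolding height_preserving_def by blast
    moreover have "emul i e \<in> ext_multiples c (p ^ j) W"
      using e ext_multiples_power_antimono[OF \<open>j \<le> H\<close> W] ext_multiples_emul W by blast
    ultimately show ?thesis using \<sigma>'(2) v W ext_multiples_eadd by simp
  qed
qed

lemma height_preserving_lift_step:
  assumes W: "is_subgroup W" and pr: "prime p" and pure: "pure_on c p W"
    and no_inf: "\<forall>w\<in>W. w \<noteq> 0 \<longrightarrow> (\<exists>j. w \<notin> nmul (p ^ j) ` W)"
    and S: "finite S" "is_subgroup S" "S \<subseteq> W" "hom_lift c S \<sigma>" "height_preserving c p W S \<sigma>"
    and x: "x \<in> W" "x \<notin> S" "nmul p x \<in> S"
  obtains \<sigma>' where "hom_lift c (adjoin S x) \<sigma>'" "height_preserving c p W (adjoin S x) \<sigma>'"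
    "\<forall>v\<in>S. \<sigma>' v = \<sigma> v"
proof -
  obtain x' H where x': "x' - x \<in> S" "x' \<in> nmul (p ^ H) ` W"
    and max: "\<forall>v\<in>S. \<forall>j. x' + v \<in> nmul (p ^ j) ` W \<longrightarrow> j \<le> H"
    using max_height_in_coset[OF W S(1-3) x(1,2) no_inf] by blast
  obtain w where w: "w \<in> W" "x' = nmul (p ^ H) w" using x'(2) by blast
  have "nmul p x' = nmul p x + nmul p (x' - x)" by (simp flip: nmul_add_right)
  then have px': "nmul p x' \<in> S" using x(3) x'(1) S(2) by (simp add: is_subgroupD(2) subgroup_nmul)
  have "x = x' - (x' - x)" by simp
  then have "x' \<notin> S" using x'(1) x(2) S(2) subgroup_diff by metis
  have "nmul p x' = nmul (p ^ Suc H) w" using w(2) by (simp add: nmul_mult)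
  then have "\<sigma> (nmul p x') \<in> ext_multiples c (p ^ Suc H) W"
    using S(5) px' w(1) unfolding height_preserving_def by blast
  then obtain e where e: "snd e = x'" "emul p e = \<sigma> (nmul p x')" "e \<in> ext_multiples c (p ^ H) W"
    by (rule pure_root_with_height[OF W pure w hom_lift_snd[OF S(4) px']])
  obtain \<sigma>' where \<sigma>': "hom_lift c (adjoin S x') \<sigma>'" "\<forall>v\<in>S. \<sigma>' v = \<sigma> v"
    "\<forall>v\<in>S. \<forall>i. \<sigma>' (v + nmul i x') = \<sigma> v \<oplus> emul i e"
    using hom_lift_adjoin[OF S(2,4) \<open>x' \<notin> S\<close> px' pr e(1,2)] by blast
  have "height_preserving c p W (adjoin S x') \<sigma>'"
    using height_preserving_adjoin[OF W pr S(2,5) x'(2) px' max e(3) \<sigma>'(2,3)] .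
  moreover have "adjoin S x' = adjoin S x" by (rule adjoin_coset_eq[OF S(2) x'(1)])
  ultimately show ?thesis using that \<sigma>'(1,2) by simp
qed

end

lemma height_preserving_lift_extends:
  fixes c :: "'t::{ab_group_add,countable} \<times> 't \<Rightarrow> 'a::ab_group_add"
  assumes coc: "cocycle c" and T: "p_group p TYPE('t)" and W: "is_subgroup W"
    and pure: "pure_on c p W"
    and no_inf: "\<forall>w\<in>W. w \<noteq> 0 \<longrightarrow> (\<exists>j. w \<notin> nmul (p ^ j) ` W)"
    and S0: "finite S0" "is_subgroup S0" "S0 \<subseteq> W" "hom_lift c S0 \<sigma>0" "height_preserving c p W S0 \<sigma>0"
  obtains \<sigma> where "\<forall>v\<in>S0. \<sigma> v = \<sigma>0 v" "hom_lift c W \<sigma>"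
proof -
  interpret cocycle c by (rule coc)
  have pr: "prime p" and tors: "\<forall>t::'t. \<exists>k. nmul (p ^ k) t = 0"
    using T unfolding p_group_def by auto
  have p0: "p > 0" using pr prime_gt_0_nat by blast
  define Q where "Q S \<sigma> \<longleftrightarrow> finite S \<and> is_subgroup S \<and> S \<subseteq> W \<and> hom_lift c S \<sigma> \<and>
    height_preserving c p W S \<sigma>" for S \<sigma>
  show ?thesis
  proof (rule hom_lift_exhaustion[OF W tors, of Q S0 \<sigma>0])
    fix S \<sigma> x assume "Q S \<sigma>" and x: "x \<in> W" "x \<notin> S" "nmul p x \<in> S"
    then have S: "finite S" "is_subgroup S" "S \<subseteq> W" "hom_lift c S \<sigma>" "height_preserving c p W S \<sigma>"
      unfolding Q_def by auto
    obtain \<sigma>' where "hom_lift c (adjoin S x) \<sigma>'" "height_preserving c p W (adjoin S x) \<sigma>'"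
      "\<forall>v\<in>S. \<sigma>' v = \<sigma> v"
      by (rule height_preserving_lift_step[OF W pr pure no_inf S x])
    moreover have "finite (adjoin S x)" "is_subgroup (adjoin S x)" "adjoin S x \<subseteq> W"
      using finite_adjoin[OF S(1,2) x(3) p0] is_subgroup_adjoin[OF S(2) x(3) p0]
        adjoin_subset[OF W S(3) x(1)] by auto
    ultimately show "\<exists>\<sigma>'. Q (adjoin S x) \<sigma>' \<and> (\<forall>v\<in>S. \<sigma>' v = \<sigma> v)"
      unfolding Q_def by blast
  qed (use S0 that in \<open>auto simp: Q_def\<close>)
qed

section \<open>Lifting over a bounded kernel\<close>

definition lift_span ::
    "('t::ab_group_add \<times> 't \<Rightarrow> 'a::ab_group_add) \<Rightarrow> nat \<Rightarrow> nat \<Rightarrow> 't set \<Rightarrow> ('t \<Rightarrow> 'a \<times> 't) \<Rightarrow> nat \<Rightarrow> ('a \<times> 't) set" where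
  "lift_span c p m S \<sigma> j =
     {ext_add c (ext_mul c (p ^ j) g) (ext_add c (\<sigma> v) (ext_mul c (p ^ m) f)) | g v f. v \<in> S}"

definition pure_modulo_lifts ::
    "('t::ab_group_add \<times> 't \<Rightarrow> 'a::ab_group_add) \<Rightarrow> nat \<Rightarrow> nat \<Rightarrow> 't set \<Rightarrow> ('t \<Rightarrow> 'a \<times> 't) \<Rightarrow> bool" where
  "pure_modulo_lifts c p m S \<sigma> \<longleftrightarrow>
     (\<forall>j a. (a, 0) \<in> lift_span c p m S \<sigma> j \<longrightarrow> a \<in> range (nmul (p ^ j)))"

context cocycle begin

lemma lift_spanI: "v \<in> S \<Longrightarrow> emul (p ^ j) g \<oplus> (\<sigma> v \<oplus> emul (p ^ m) f) \<in> lift_span c p m S \<sigma> j"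
  unfolding lift_span_def by blast

lemma lift_spanE:
  assumes "e \<in> lift_span c p m S \<sigma> j"
  obtains g v f where "v \<in> S" "e = emul (p ^ j) g \<oplus> (\<sigma> v \<oplus> emul (p ^ m) f)"
  using assms unfolding lift_span_def by blast

context
  fixes S \<sigma> assumes S: "is_subgroup S" "hom_lift c S \<sigma>"
begin

lemma lift_span_eadd:
  assumes "e \<in> lift_span c p m S \<sigma> j" "e' \<in> lift_span c p m S \<sigma> j"
  shows "e \<oplus> e' \<in> lift_span c p m S \<sigma> j"
proof -
  obtain g v f g' v' f' where "v \<in> S" "e = emul (p ^ j) g \<oplus> (\<sigma> v \<oplus> emul (p ^ m) f)"
    "v' \<in> S" "e' = emul (p ^ j) g' \<oplus> (\<sigma> v' \<oplus> emul (p ^ m) f')"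
    using assms by (metis lift_spanE)
  moreover from this have "\<sigma> (v + v') = \<sigma> v \<oplus> \<sigma> v'" "v + v' \<in> S"
    using S by (simp_all add: hom_lift_add is_subgroupD(2))
  ultimately show ?thesis
    using lift_spanI[of "v + v'" S p j "g \<oplus> g'" \<sigma> m "f \<oplus> f'"] by (simp add: emul_eadd eadd_ac)
qed

lemma lift_span_eneg:
  assumes "e \<in> lift_span c p m S \<sigma> j"
  shows "\<ominus> e \<in> lift_span c p m S \<sigma> j"
proof -
  obtain g v f where "v \<in> S" "e = emul (p ^ j) g \<oplus> (\<sigma> v \<oplus> emul (p ^ m) f)"
    using assms by (rule lift_spanE)
  moreover from this have "\<sigma> (- v) = \<ominus> (\<sigma> v)" "- v \<in> S"
    using S by (simp_all add: hom_lift_minus is_subgroupD(3))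
  ultimately show ?thesis
    using lift_spanI[of "- v" S p j "\<ominus> g" \<sigma> m "\<ominus> f"] by (simp add: emul_eneg eneg_eadd)
qed

lemma lift_span_emul_Suc:
  assumes "e \<in> lift_span c p m S \<sigma> j"
  shows "emul p e \<in> lift_span c p m S \<sigma> (Suc j)"
proof -
  obtain g v f where "v \<in> S" "e = emul (p ^ j) g \<oplus> (\<sigma> v \<oplus> emul (p ^ m) f)"
    using assms by (rule lift_spanE)
  moreover from this have "\<sigma> (nmul p v) = emul p (\<sigma> v)" "nmul p v \<in> S"
    using S by (simp_all add: hom_lift_nmul subgroup_nmul)
  ultimately show ?thesis
    using lift_spanI[of "nmul p v" S p "Suc j" g \<sigma> m "emul p f"]
    by (simp add: emul_eadd flip: emul_mult) (metis mult.commute)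
qed

lemma lift_span_lift: "v \<in> S \<Longrightarrow> \<sigma> v \<in> lift_span c p m S \<sigma> j"
  using lift_spanI[of v S p j "(0, 0)" \<sigma> m "(0, 0)"] by simp

lemma lift_span_multiple: "emul (p ^ j) g \<in> lift_span c p m S \<sigma> j"
  using lift_spanI[OF is_subgroupD(1)[OF S(1)], of p j g \<sigma> m "(0, 0)"] hom_lift_zero[OF S(2,1)]
  by simp

lemma zero_mem_lift_span: "(0, 0) \<in> lift_span c p m S \<sigma> j"
  using lift_span_multiple[where j = j and g = "(0, 0)"] by simp

lemma lift_span_emul:
  assumes "e \<in> lift_span c p m S \<sigma> j"
  shows "emul n e \<in> lift_span c p m S \<sigma> j"
  by (induct n) (simp_all add: assms lift_span_eadd zero_mem_lift_span)

lemma lift_span_any: "e \<in> lift_span c p m S \<sigma> 0"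
  using lift_span_multiple[where j = 0 and g = e] by simp

lemma lift_span_antimono:
  assumes "i \<le> j" "e \<in> lift_span c p m S \<sigma> j"
  shows "e \<in> lift_span c p m S \<sigma> i"
proof -
  obtain g v f where "v \<in> S" "e = emul (p ^ j) g \<oplus> (\<sigma> v \<oplus> emul (p ^ m) f)"
    using assms(2) by (rule lift_spanE)
  moreover have "p ^ j = p ^ i * p ^ (j - i)" using assms(1) by (simp flip: power_add)
  ultimately show ?thesis
    using lift_spanI[of v S p i "emul (p ^ (j - i)) g" \<sigma> m f] by (simp add: emul_mult)
qed

lemma lift_span_top:
  assumes "e \<in> lift_span c p m S \<sigma> m"
  shows "e \<in> lift_span c p m S \<sigma> j"
proof -
  obtain g v f where "v \<in> S" "e = emul (p ^ m) g \<oplus> (\<sigma> v \<oplus> emul (p ^ m) f)"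
    using assms by (rule lift_spanE)
  then show ?thesis
    using lift_spanI[of v S p j "(0, 0)" \<sigma> m "g \<oplus> f"] by (simp add: emul_eadd eadd_ac)
qed

end

end

context cocycle begin

text \<open>Among the levels \<open>j \<le> m\<close> at which \<open>x\<close> has a lift in \<open>lift_span c p m S \<sigma> j\<close>, take the
  highest one, \<open>J\<close>; a lift \<open>e\<close> at level \<open>J\<close> can be corrected so that \<open>p e = \<sigma> (p x)\<close>. By
  maximality, \<open>e - a\<close> can only be at level \<open>j\<close> if \<open>e\<close> is, and then \<open>a\<close> is as well.\<close>

lemma root_of_maximal_level:
  assumes S: "is_subgroup S" "hom_lift c S \<sigma>" "pure_modulo_lifts c p m S \<sigma>"
    and x: "nmul p x \<in> S"
  obtains e where "snd e = x" "emul p e = \<sigma> (nmul p x)"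
    "\<And>j a. e \<oplus> \<ominus> (a, 0) \<in> lift_span c p m S \<sigma> j \<Longrightarrow> a \<in> range (nmul (p ^ j))"
proof -
  let ?L = "lift_span c p m S \<sigma>"
  define levels where "levels = {j. j \<le> m \<and> (\<exists>a. (a, x) \<in> ?L j)}"
  have "finite levels" by (rule finite_subset[of _ "{..m}"]) (auto simp: levels_def)
  moreover have "0 \<in> levels" using lift_span_any[OF S(1,2)] by (simp add: levels_def)
  ultimately have J: "Max levels \<in> levels" "\<And>j. j \<in> levels \<Longrightarrow> j \<le> Max levels"
    using Max_in Max_ge by blast+
  define J where "J = Max levels"
  obtain a0 where a0: "(a0, x) \<in> ?L J" using J(1) by (auto simp: levels_def J_def)
  define d where "d = emul p (a0, x) \<oplus> \<ominus> (\<sigma> (nmul p x))"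
  have "snd d = 0" using hom_lift_snd[OF S(2) x] by (simp add: d_def)
  moreover have "d \<in> ?L (Suc J)"
    unfolding d_def using S a0 x
    by (simp add: lift_span_eadd lift_span_eneg lift_span_emul_Suc lift_span_lift)
  ultimately obtain a' where a': "d = (nmul (p ^ Suc J) a', 0)"
    using S(3) unfolding pure_modulo_lifts_def by (metis prod.collapse rangeE)
  define e where "e = (a0, x) \<oplus> \<ominus> (nmul (p ^ J) a', 0)"
  have "emul p e = emul p (a0, x) \<oplus> \<ominus> d"
    using a' by (simp add: e_def emul_eadd emul_eneg nmul_mult nmul_minus)
  also have "\<dots> = \<sigma> (nmul p x)" by (simp add: d_def eneg_eadd)
  finally have pe: "emul p e = \<sigma> (nmul p x)" .
  have eJ: "e \<in> ?L J"
    using lift_span_eadd[OF S(1,2) a0 lift_span_eneg[OF S(1,2) lift_span_multiple[OF S(1,2)]],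
      of "(a', 0)"]
    by (simp add: e_def del: eneg_kernel)
  have "a \<in> range (nmul (p ^ j))" if a: "e \<oplus> \<ominus> (a, 0) \<in> ?L j" for j a
  proof -
    have "snd (e \<oplus> \<ominus> (a, 0)) = x" by (simp add: e_def)
    then have ax: "(fst (e \<oplus> \<ominus> (a, 0)), x) \<in> ?L j" using a by (metis prod.collapse)
    have e_j: "e \<in> ?L j"
    proof (cases "j \<le> J")
      case True
      then show ?thesis using lift_span_antimono[OF S(1,2) _ eJ] by blast
    next
      case False
      have "\<not> j \<le> m" using False ax J(2)[of j] by (auto simp: levels_def J_def)
      then have "(fst (e \<oplus> \<ominus> (a, 0)), x) \<in> ?L m" using lift_span_antimono[OF S(1,2) _ ax] by simp
      then have "m \<in> levels" unfolding levels_def by blast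
      then have "m \<le> J" using J(2) by (simp add: J_def)
      moreover have "J \<le> m" using J(1) by (simp add: levels_def J_def)
      ultimately show ?thesis using lift_span_top[OF S(1,2)] eJ by simp
    qed
    have "e \<oplus> \<ominus> (e \<oplus> \<ominus> (a, 0)) \<in> ?L j"
      by (rule lift_span_eadd[OF S(1,2) e_j lift_span_eneg[OF S(1,2) a]])
    moreover have "e \<oplus> \<ominus> (e \<oplus> \<ominus> (a, 0)) = (a, 0)" by (simp only: eneg_eadd eneg_eneg) simp
    ultimately have "(a, 0) \<in> ?L j" by metis
    then show ?thesis using S(3) unfolding pure_modulo_lifts_def by blast
  qed
  moreover have "snd e = x" by (simp add: e_def)
  ultimately show ?thesis using that pe by blast
qed

end

context cocycle begin

lemma pure_modulo_lifts_adjoin: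
  assumes pr: "prime p"
    and S: "is_subgroup S" "hom_lift c S \<sigma>" and x: "nmul p x \<in> S"
    and e: "\<And>j a. e \<oplus> \<ominus> (a, 0) \<in> lift_span c p m S \<sigma> j \<Longrightarrow> a \<in> range (nmul (p ^ j))"
    and \<sigma>': "\<forall>v\<in>S. \<sigma>' v = \<sigma> v" "\<forall>v\<in>S. \<forall>i. \<sigma>' (v + nmul i x) = \<sigma> v \<oplus> emul i e"
    and pure: "pure_modulo_lifts c p m S \<sigma>"
  shows "pure_modulo_lifts c p m (adjoin S x) \<sigma>'"
  unfolding pure_modulo_lifts_def
proof (intro allI impI)
  let ?L = "lift_span c p m S \<sigma>"
  fix j a assume "(a, 0) \<in> lift_span c p m (adjoin S x) \<sigma>' j"
  then obtain h u f where "u \<in> adjoin S x" and a: "(a, 0) = emul (p ^ j) h \<oplus> (\<sigma>' u \<oplus> emul (p ^ m) f)"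
    by (rule lift_spanE)
  then obtain v i where v: "v \<in> S" "u = v + nmul i x" by (metis adjoinE)
  define Y where "Y = emul (p ^ j) h \<oplus> (\<sigma> v \<oplus> emul (p ^ m) f)"
  have Y: "Y \<in> ?L j" unfolding Y_def using v(1) by (rule lift_spanI)
  have aY: "(a, 0) = Y \<oplus> emul i e" using a v \<sigma>'(2) by (simp add: Y_def eadd_ac)
  show "a \<in> range (nmul (p ^ j))"
  proof (cases "p dvd i")
    case True
    then obtain q where "i = q * p" by (metis dvd_def mult.commute)
    then have "u \<in> S" using v x S(1) by (simp add: nmul_mult is_subgroupD(2) subgroup_nmul)
    then have "(a, 0) \<in> ?L j" using a \<sigma>'(1) lift_spanI by simp
    then show ?thesis using pure unfolding pure_modulo_lifts_def by blast
  next
    case False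
    obtain i' q where iq: "i * i' = Suc (q * p ^ j)"
      using coprime_inverse_mod_prime_power[OF pr False] by blast
    have "emul i' (a, 0) = emul i' Y \<oplus> emul (i * i') e"
      using aY by (simp add: emul_eadd emul_commute flip: emul_mult) (metis mult.commute)
    also have "\<dots> = e \<oplus> (emul i' Y \<oplus> emul (p ^ j) (emul q e))"
      by (simp add: iq emul_add_left emul_commute eadd_ac flip: emul_mult)
    finally have "e \<oplus> \<ominus> (nmul i' a, 0) = \<ominus> (emul i' Y \<oplus> emul (p ^ j) (emul q e))"
      by (simp add: eneg_eadd eadd_ac del: eneg_kernel)
    moreover have "\<ominus> (emul i' Y \<oplus> emul (p ^ j) (emul q e)) \<in> ?L j"
      using Y S by (simp add: lift_span_eneg lift_span_eadd lift_span_emul lift_span_multiple)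
    ultimately have "nmul i' a \<in> range (nmul (p ^ j))" by (metis e)
    then obtain b where b: "nmul i' a = nmul (p ^ j) b" by blast
    have "nmul i (nmul i' a) = a + nmul (p ^ j) (nmul q a)"
      using iq by (simp flip: nmul_mult) (simp add: mult.commute)
    then have "a = nmul (p ^ j) (nmul i b - nmul q a)"
      using b by (simp add: nmul_diff nmul_commute[of i] algebra_simps)
    then show ?thesis by blast
  qed
qed

end

lemma pure_modulo_lifts_zero:
  assumes coc: "cocycle c" and pure: "pure_on c p UNIV" and bound: "\<forall>a::'a. nmul (p ^ m) a = 0"
  shows "pure_modulo_lifts c p m {0} (\<lambda>_. (0::'a::ab_group_add, 0::'t::ab_group_add))"
  unfolding pure_modulo_lifts_def
proof (intro allI impI)
  interpret cocycle c by (rule coc)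
  fix j a assume "(a, 0) \<in> lift_span c p m {0} (\<lambda>_. (0, 0)) j"
  then obtain g f where gf: "(a, 0) = emul (p ^ j) g \<oplus> emul (p ^ m) f"
    by (auto elim: lift_spanE)
  show "a \<in> range (nmul (p ^ j))"
  proof (cases "j \<le> m")
    case True
    have "p ^ m = p ^ j * p ^ (m - j)" using True by (simp flip: power_add)
    then have "(a, 0) = emul (p ^ j) (g \<oplus> emul (p ^ (m - j)) f)"
      using gf by (simp add: emul_mult emul_eadd)
    then have "(a, 0) \<in> ext_multiples c (p ^ j) UNIV" by (metis ext_multiplesI UNIV_I)
    then show ?thesis using pure unfolding pure_on_def by blast
  next
    case False
    have "p ^ j = p ^ m * p ^ (j - m)" using False by (simp flip: power_add)
    then have "(a, 0) = emul (p ^ m) (emul (p ^ (j - m)) g \<oplus> f)"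
      using gf by (simp add: emul_mult emul_eadd)
    then have "(a, 0) \<in> ext_multiples c (p ^ m) UNIV" by (metis ext_multiplesI UNIV_I)
    then have "a \<in> range (nmul (p ^ m))" using pure unfolding pure_on_def by blast
    then have "a = 0" using bound by auto
    then show ?thesis by (metis nmul_zero_right rangeI)
  qed
qed

lemma hom_lift_of_bounded_pure:
  fixes c :: "'t::{ab_group_add,countable} \<times> 't \<Rightarrow> 'a::ab_group_add"
  assumes coc: "cocycle c" and T: "p_group p TYPE('t)"
    and pure: "pure_on c p UNIV" and bound: "\<forall>a::'a. nmul (p ^ m) a = 0"
  obtains \<sigma> where "hom_lift c UNIV \<sigma>"
proof -
  interpret cocycle c by (rule coc)
  have pr: "prime p" and tors: "\<forall>t::'t. \<exists>k. nmul (p ^ k) t = 0"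
    using T unfolding p_group_def by auto
  have p0: "p > 0" using pr prime_gt_0_nat by blast
  define Q where "Q S \<sigma> \<longleftrightarrow> is_subgroup S \<and> hom_lift c S \<sigma> \<and> pure_modulo_lifts c p m S \<sigma>" for S \<sigma>
  have "Q {0} (\<lambda>_. (0, 0))"
    using is_subgroup_zero pure_modulo_lifts_zero[OF coc pure bound] by (simp add: Q_def hom_lift_def)
  then show ?thesis
  proof (rule hom_lift_exhaustion[OF is_subgroup_UNIV tors, of Q "{0}" "\<lambda>_. (0, 0)"])
    fix S \<sigma> x assume "Q S \<sigma>" "x \<in> UNIV" and x: "x \<notin> S" "nmul p x \<in> S"
    then have S: "is_subgroup S" "hom_lift c S \<sigma>" "pure_modulo_lifts c p m S \<sigma>"
      unfolding Q_def by auto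
    obtain e where e: "snd e = x" "emul p e = \<sigma> (nmul p x)"
      "\<And>j a. e \<oplus> \<ominus> (a, 0) \<in> lift_span c p m S \<sigma> j \<Longrightarrow> a \<in> range (nmul (p ^ j))"
      using root_of_maximal_level[OF S x(2)] by blast
    obtain \<sigma>' where \<sigma>': "hom_lift c (adjoin S x) \<sigma>'" "\<forall>v\<in>S. \<sigma>' v = \<sigma> v"
      "\<forall>v\<in>S. \<forall>i. \<sigma>' (v + nmul i x) = \<sigma> v \<oplus> emul i e"
      by (rule hom_lift_adjoin[OF S(1,2) x pr e(1,2)])
    have "pure_modulo_lifts c p m (adjoin S x) \<sigma>'"
      by (rule pure_modulo_lifts_adjoin[OF pr S(1,2) x(2) e(3) \<sigma>'(2,3) S(3)])
    then show "\<exists>\<sigma>'. Q (adjoin S x) \<sigma>' \<and> (\<forall>v\<in>S. \<sigma>' v = \<sigma> v)"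
      using \<sigma>'(1,2) is_subgroup_adjoin[OF S(1) x(2) p0] unfolding Q_def by blast
  qed (auto simp: Q_def intro: that)
qed

section \<open>Sufficiency\<close>

text \<open>On the finite set of pairs from \<open>\<langle>t\<rangle>\<close>, where \<open>t = snd g\<close> and \<open>n t = 0\<close>, the cocycle is a
  coboundary; this gives a lift of \<open>\<langle>t\<rangle>\<close> that kills the \<open>T\<close>-part of \<open>n g\<close>.\<close>

lemma (in cocycle) locally_split_kernel_divisible:
  assumes ls: "locally_split c" and n: "n > 0" and g: "(a, 0) = emul n g"
  shows "a \<in> range (nmul n)"
proof -
  define t where "t = snd g"
  have tn: "nmul n t = 0" using g by (metis snd_conv snd_emul t_def)
  have mod_n: "nmul k t = nmul (k mod n) t" for k
  proof -
    have "nmul k t = nmul (k div n * n) t + nmul (k mod n) t" by (simp flip: nmul_add_left)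
    then show ?thesis by (simp add: nmul_mult tn)
  qed
  define F where "F = (\<lambda>(i, k). (nmul i t, nmul k t)) ` ({..<n} \<times> {..<n})"
  have inF: "(nmul i t, nmul k t) \<in> F" for i k
  proof -
    have "(i mod n, k mod n) \<in> {..<n} \<times> {..<n}" using n by simp
    then have "(nmul (i mod n) t, nmul (k mod n) t) \<in> F" unfolding F_def by (rule rev_image_eqI) simp
    then show ?thesis unfolding mod_n[of i] mod_n[of k] .
  qed
  have "finite F" by (simp add: F_def)
  then obtain \<phi> where \<phi>: "\<phi> 0 = 0" "\<forall>x y. (x, y) \<in> F \<longrightarrow> c (x, y) = \<phi> y - \<phi> (x + y) + \<phi> x"
    using ls unfolding locally_split_def by blast
  define s where "s u = (- \<phi> u, u)" for u
  have s_mul: "emul k (s t) = s (nmul k t)" for k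
  proof (induct k)
    case 0 then show ?case by (simp add: s_def \<phi>(1))
  next
    case (Suc k)
    have "c (t, nmul k t) = \<phi> (nmul k t) - \<phi> (t + nmul k t) + \<phi> t"
      using \<phi>(2) inF[of 1 k] by simp
    then show ?case using Suc by (simp add: s_def ext_add_def)
  qed
  have "(fst g + \<phi> t, 0) \<oplus> s t = g" by (simp add: s_def eadd_kernel_left t_def)
  moreover have "emul n ((fst g + \<phi> t, 0) \<oplus> s t) = (nmul n (fst g + \<phi> t), 0)"
    using tn by (simp add: emul_eadd s_mul) (simp add: s_def \<phi>(1))
  ultimately have "emul n g = (nmul n (fst g + \<phi> t), 0)" by metis
  then show ?thesis using g by auto
qed

lemma locally_split_imp_pure:
  assumes "cocycle c" "locally_split c" "p > 0"
  shows "pure_on c p UNIV"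
  unfolding pure_on_def ext_multiples_def
  using cocycle.locally_split_kernel_divisible[OF assms(1,2)] assms(3) by auto

lemma mem_ulm1_iff:
  assumes "p_group p TYPE('t::ab_group_add)"
  shows "(w::'t) \<in> ulm1 \<longleftrightarrow> (\<forall>j. w \<in> range (nmul (p ^ j)))"
proof
  have "p > 0" using assms prime_gt_0_nat unfolding p_group_def by blast
  then show "w \<in> ulm1 \<Longrightarrow> \<forall>j. w \<in> range (nmul (p ^ j))"
    unfolding ulm1_def by (simp add: Suc_le_eq)
next
  assume w: "\<forall>j. w \<in> range (nmul (p ^ j))"
  have "w \<in> range (nmul n)" if "n \<ge> 1" for n
  proof -
    have pr: "prime p" using assms unfolding p_group_def by blast
    have "n \<noteq> 0" using that by simp
    then obtain v q where vq: "n = p ^ v * q" "\<not> p dvd q"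
      by (rule prime_power_coprime_factor[OF pr])
    obtain w' where w': "w = nmul (p ^ v) w'" using w by blast
    obtain k where "nmul (p ^ k) w' = 0" using assms unfolding p_group_def by blast
    then obtain q' where "nmul q (nmul q' w') = w'" using nmul_coprime_inverse[OF pr vq(2)] by blast
    then have "w = nmul n (nmul q' w')" using w' vq(1) by (simp add: nmul_mult)
    then show ?thesis by blast
  qed
  then show "w \<in> ulm1" unfolding ulm1_def by blast
qed

lemma bounded_p_group_exponent:
  assumes A: "p_group p TYPE('a::ab_group_add)" and bd: "bounded_grp TYPE('a)"
  obtains m where "\<forall>a::'a. nmul (p ^ m) a = 0"
proof -
  have pr: "prime p" using A unfolding p_group_def by blast
  obtain n where n: "n \<ge> 1" "\<forall>a::'a. nmul n a = 0" using bd unfolding bounded_grp_def by blast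
  have "n \<noteq> 0" using n(1) by simp
  then obtain v q where vq: "n = p ^ v * q" "\<not> p dvd q"
    by (rule prime_power_coprime_factor[OF pr])
  have "nmul (p ^ v) a = 0" for a :: 'a
  proof -
    obtain k where "nmul (p ^ k) (nmul (p ^ v) a) = 0" using A unfolding p_group_def by blast
    then obtain q' where "nmul q' (nmul q (nmul (p ^ v) a)) = nmul (p ^ v) a"
      using nmul_coprime_inverse[OF pr vq(2)] by blast
    moreover have "nmul q (nmul (p ^ v) a) = 0"
      using n(2) vq(1) by (metis mult.commute nmul_mult)
    ultimately show ?thesis by simp
  qed
  then show ?thesis using that by blast
qed

lemma coboundary_if_ulm1_zero:
  fixes c :: "'t::{ab_group_add,countable} \<times> 't \<Rightarrow> 'a::ab_group_add"
  assumes T: "p_group p TYPE('t)" and ulm: "(ulm1 :: 't set) = {0}"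
    and c: "c \<in> cocycles" "locally_split c"
  shows "c \<in> coboundaries"
proof -
  have coc: "cocycle c" using c(1) by (rule cocycles_imp_cocycle)
  have "p > 0" using T prime_gt_0_nat unfolding p_group_def by blast
  then have pure: "pure_on c p UNIV" using locally_split_imp_pure[OF coc c(2)] by blast
  have no_inf: "\<forall>w\<in>(UNIV::'t set). w \<noteq> 0 \<longrightarrow> (\<exists>j. w \<notin> nmul (p ^ j) ` UNIV)"
  proof (intro ballI impI)
    fix w :: 't assume "w \<noteq> 0"
    then have "w \<notin> ulm1" using ulm by blast
    then show "\<exists>j. w \<notin> nmul (p ^ j) ` UNIV" using mem_ulm1_iff[OF T] by blast
  qed
  have "hom_lift c {0} (\<lambda>_. (0, 0))" "height_preserving c p UNIV {0} (\<lambda>_. (0, 0))"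
    using cocycle.zero_mem_ext_multiples[OF coc is_subgroup_UNIV]
    by (simp_all add: hom_lift_def height_preserving_def cocycle.eadd_zero_left[OF coc])
  then obtain \<sigma> where "hom_lift c UNIV \<sigma>"
    using height_preserving_lift_extends[OF coc T is_subgroup_UNIV pure no_inf finite.insertI[OF finite.emptyI]
      is_subgroup_zero subset_UNIV] by metis
  then show ?thesis by (rule cocycle.hom_lift_UNIV_imp_coboundary[OF coc])
qed

lemma coboundary_if_bounded:
  fixes c :: "'t::{ab_group_add,countable} \<times> 't \<Rightarrow> 'a::ab_group_add"
  assumes T: "p_group p TYPE('t)" and A: "p_group p TYPE('a)" and bd: "bounded_grp TYPE('a)"
    and c: "c \<in> cocycles" "locally_split c"
  shows "c \<in> coboundaries"
proof -
  have coc: "cocycle c" using c(1) by (rule cocycles_imp_cocycle)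
  have "p > 0" using T prime_gt_0_nat unfolding p_group_def by blast
  then have pure: "pure_on c p UNIV" using locally_split_imp_pure[OF coc c(2)] by blast
  obtain m where "\<forall>a::'a. nmul (p ^ m) a = 0" using bounded_p_group_exponent[OF A bd] by blast
  then obtain \<sigma> where "hom_lift c UNIV \<sigma>" using hom_lift_of_bounded_pure[OF coc T pure] by blast
  then show ?thesis by (rule cocycle.hom_lift_UNIV_imp_coboundary[OF coc])
qed

section \<open>Necessity\<close>

lemma ulm1_nmul: "t \<in> ulm1 \<Longrightarrow> nmul k t \<in> ulm1"
  unfolding ulm1_def by (auto simp: image_iff) (metis nmul_commute)

lemma exists_order_p_multiple:
  assumes "t \<noteq> 0" "nmul (p ^ k) t = 0"
  obtains i where "nmul (p ^ i) t \<noteq> 0" "nmul p (nmul (p ^ i) t) = 0"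
  using assms(2)
proof (induct k)
  case 0 then show ?case using assms(1) by simp
next
  case (Suc k)
  show ?case
  proof (cases "nmul (p ^ k) t = 0")
    case True then show ?thesis using Suc.hyps Suc.prems(1) by blast
  next
    case False then show ?thesis using Suc.prems by (simp add: nmul_mult)
  qed
qed

lemma ulm1_order_p_element:
  assumes T: "p_group p TYPE('t::ab_group_add)" and ulm: "(ulm1 :: 't set) \<noteq> {0}"
  obtains y where "(y::'t) \<in> ulm1" "y \<noteq> 0" "nmul p y = 0"
proof -
  have "(0::'t) \<in> ulm1" unfolding ulm1_def by (auto intro!: image_eqI[of _ _ 0])
  then obtain t :: 't where t: "t \<in> ulm1" "t \<noteq> 0" using ulm by blast
  obtain k where "nmul (p ^ k) t = 0" using T unfolding p_group_def by blast
  then obtain i where "nmul (p ^ i) t \<noteq> 0" "nmul p (nmul (p ^ i) t) = 0"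
    using exists_order_p_multiple t(2) by metis
  then show ?thesis using that ulm1_nmul[OF t(1)] by blast
qed

text \<open>If every element of order \<open>p\<close> in \<open>p\<^sup>K A\<close> has infinite height, then every \<open>x \<in> p\<^sup>K A\<close>
  is \<open>p\<close>-divisible in \<open>p\<^sup>K A\<close>: by induction on the order of \<open>x\<close>, subtract from \<open>x\<close> a
  \<open>p\<close>-multiple of \<open>p\<^sup>K A\<close> with the same image of order \<open>p\<close>.\<close>

lemma p_divisible_if_socle_infinite_height:
  fixes D :: "'a::ab_group_add set" and p K :: nat
  defines "D \<equiv> range (nmul (p ^ K))"
  assumes socle: "\<And>(\<epsilon>::'a) M. nmul p \<epsilon> = 0 \<Longrightarrow> \<epsilon> \<in> D \<Longrightarrow> \<epsilon> \<in> range (nmul (p ^ M))"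
    and x: "x \<in> D" "nmul (p ^ r) x = 0"
  shows "x \<in> nmul p ` D"
  using x
proof (induct r arbitrary: x)
  case 0
  then show ?case by (simp add: D_def image_iff) (metis nmul_zero_right)
next
  case (Suc r)
  have D: "is_subgroup D" unfolding D_def by (rule is_subgroup_image_nmul[OF is_subgroup_UNIV])
  define \<epsilon> where "\<epsilon> = nmul (p ^ r) x"
  have "nmul p \<epsilon> = 0" using Suc.prems(2) by (simp add: \<epsilon>_def flip: nmul_mult)
  moreover have "\<epsilon> \<in> D" using Suc.prems(1) D by (simp add: \<epsilon>_def subgroup_nmul)
  ultimately obtain w where w: "\<epsilon> = nmul (p ^ (r + Suc K)) w" using socle by blast
  define z where "z = nmul (p ^ K) w"
  have z: "z \<in> D" by (simp add: z_def D_def)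
  have "nmul (p ^ r) (x - nmul p z) = 0"
    using w by (simp add: \<epsilon>_def z_def nmul_diff power_add flip: nmul_mult) (simp add: ac_simps)
  moreover have "x - nmul p z \<in> D" using Suc.prems(1) z D by (simp add: subgroup_diff subgroup_nmul)
  ultimately have "x - nmul p z \<in> nmul p ` D" using Suc.hyps by blast
  moreover have "nmul p z \<in> nmul p ` D" using z by blast
  ultimately have "(x - nmul p z) + nmul p z \<in> nmul p ` D"
    using is_subgroupD(2)[OF is_subgroup_image_nmul[OF D]] by blast
  then show ?case by simp
qed

lemma divisible_if_p_divisible:
  assumes A: "p_group p TYPE('a::ab_group_add)"
    and D: "is_subgroup (D :: 'a set)" "D \<subseteq> nmul p ` D"
  shows "divisible_set D"
  unfolding divisible_set_def
proof (intro ballI allI impI)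
  fix d n assume d: "d \<in> D" and "(n::nat) \<ge> 1"
  have pr: "prime p" using A unfolding p_group_def by blast
  have "n \<noteq> 0" using \<open>n \<ge> 1\<close> by simp
  then obtain v q where vq: "n = p ^ v * q" "\<not> p dvd q"
    by (rule prime_power_coprime_factor[OF pr])
  have "D \<subseteq> nmul (p ^ v) ` D" for v
  proof (induct v)
    case (Suc v)
    show ?case
    proof
      fix x assume "x \<in> D"
      then obtain x1 where "x1 \<in> D" "x = nmul p x1" using D(2) by blast
      moreover from this obtain x2 where "x2 \<in> D" "x1 = nmul (p ^ v) x2" using Suc by blast
      ultimately show "x \<in> nmul (p ^ Suc v) ` D" by (simp add: nmul_mult)
    qed
  qed simp
  then obtain d' where d': "d' \<in> D" "d = nmul (p ^ v) d'" using d by blast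
  obtain k where "nmul (p ^ k) d' = 0" using A unfolding p_group_def by blast
  then obtain q' where "nmul q (nmul q' d') = d'" using nmul_coprime_inverse[OF pr vq(2)] by blast
  then have "nmul n (nmul q' d') = d" using d'(2) vq(1) by (simp add: nmul_mult)
  moreover have "nmul q' d' \<in> D" using d'(1) D(1) subgroup_nmul by blast
  ultimately show "\<exists>e\<in>D. nmul n e = d" by blast
qed

lemma socle_element_of_finite_height:
  assumes A: "p_group p TYPE('a::ab_group_add)" and red: "reduced TYPE('a)"
    and unb: "\<not> bounded_grp TYPE('a)"
  obtains \<epsilon> M where "nmul p (\<epsilon>::'a) = 0" "\<epsilon> \<in> range (nmul (p ^ K))" "\<epsilon> \<notin> range (nmul (p ^ M))"
proof (rule ccontr)
  assume "\<not> thesis"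
  then have socle: "\<And>(\<epsilon>::'a) M. nmul p \<epsilon> = 0 \<Longrightarrow> \<epsilon> \<in> range (nmul (p ^ K)) \<Longrightarrow>
      \<epsilon> \<in> range (nmul (p ^ M))"
    using that by blast
  define D where "D = range (nmul (p ^ K) :: 'a \<Rightarrow> 'a)"
  have D: "is_subgroup D" unfolding D_def by (rule is_subgroup_image_nmul[OF is_subgroup_UNIV])
  have "D \<subseteq> nmul p ` D"
  proof
    fix x assume "x \<in> D"
    moreover obtain r where "nmul (p ^ r) x = 0" using A unfolding p_group_def by blast
    ultimately show "x \<in> nmul p ` D"
      using p_divisible_if_socle_infinite_height[OF socle] unfolding D_def by blast
  qed
  then have "D = {0}" using red divisible_if_p_divisible[OF A D] D unfolding reduced_def by blast
  moreover have "p ^ K \<ge> 1" using A prime_gt_0_nat unfolding p_group_def by (simp add: Suc_le_eq)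
  ultimately show False using unb unfolding bounded_grp_def D_def by (metis rangeI singletonD)
qed

lemma sum_tail_in_range_nmul:
  fixes d :: "nat \<Rightarrow> 'a::ab_group_add"
  assumes N: "mono N" and d: "\<And>i. d i \<in> range (nmul ((p::nat) ^ N i))"
  shows "(\<Sum>i<k + r. d i) - (\<Sum>i<k. d i) \<in> range (nmul (p ^ N k))"
proof (induct r)
  case 0
  then show ?case by (metis add_0_right diff_self nmul_zero_right rangeI)
next
  case (Suc r)
  have "d (k + r) \<in> range (nmul (p ^ N k))"
    using d[of "k + r"] range_nmul_power_antimono[OF monoD[OF N, of k "k + r"]] by auto
  then have "((\<Sum>i<k + r. d i) - (\<Sum>i<k. d i)) + d (k + r) \<in> range (nmul (p ^ N k))"
    using Suc is_subgroupD(2)[OF is_subgroup_image_nmul[OF is_subgroup_UNIV]] by blast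
  then show ?case by (simp add: algebra_simps)
qed

lemma diagonal_step_not_divisible:
  fixes \<alpha> s \<epsilon> :: "'a::ab_group_add"
  assumes "\<epsilon> \<notin> range (nmul n)"
  shows "\<alpha> - (s + (if \<alpha> - s \<in> range (nmul n) then \<epsilon> else 0)) \<notin> range (nmul n)"
proof
  assume step: "\<alpha> - (s + (if \<alpha> - s \<in> range (nmul n) then \<epsilon> else 0)) \<in> range (nmul n)"
  have R: "is_subgroup (range (nmul n) :: 'a set)" by (rule is_subgroup_image_nmul[OF is_subgroup_UNIV])
  show False
  proof (cases "\<alpha> - s \<in> range (nmul n)")
    case True
    then have "(\<alpha> - s) - (\<alpha> - (s + \<epsilon>)) \<in> range (nmul n)"
      using step R subgroup_diff by (metis (full_types))
    then show False using assms by simp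
  next
    case False
    then show False using step by simp
  qed
qed

text \<open>Diagonalise against an enumeration \<open>\<alpha>\<^sub>k\<close> of \<open>A\<close>: the \<open>k\<close>-th term is an element
  \<open>\<epsilon>\<close> of order \<open>p\<close> and height at least \<open>N k\<close> but not \<open>M\<close>, added exactly when
  \<open>\<alpha>\<^sub>k - a\<^sub>k\<close> is divisible by \<open>p\<^sup>M\<close>, so that \<open>\<alpha>\<^sub>k - a\<^sub>k\<^sub>+\<^sub>1\<close> is not; all later
  terms are divisible by \<open>p\<^sup>M\<close> and cannot repair this.\<close>

lemma exists_nonconvergent_socle_series:
  assumes A: "p_group p TYPE('a::{ab_group_add,countable})" and red: "reduced TYPE('a)"
    and unb: "\<not> bounded_grp TYPE('a)"
  obtains d where "\<And>k. nmul p (d k :: 'a) = 0" "\<And>k. d k \<in> range (nmul (p ^ Suc k))"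
    "\<And>\<alpha>. \<exists>k. \<alpha> - (\<Sum>i<k. d i) \<notin> range (nmul (p ^ k))"
proof -
  have "\<forall>K. \<exists>\<epsilon> M. nmul p (\<epsilon>::'a) = 0 \<and> \<epsilon> \<in> range (nmul (p ^ K)) \<and> \<epsilon> \<notin> range (nmul (p ^ M))"
    using socle_element_of_finite_height[OF A red unb] by metis
  then obtain \<epsilon> M where \<epsilon>: "\<And>K. nmul p (\<epsilon> K :: 'a) = 0" "\<And>K. \<epsilon> K \<in> range (nmul (p ^ K))"
    "\<And>K. \<epsilon> K \<notin> range (nmul (p ^ M K))"
    by metis
  define N where "N = rec_nat 1 (\<lambda>k Nk. max (Suc Nk) (M Nk))"
  have N_Suc: "N (Suc k) = max (Suc (N k)) (M (N k))" for k by (simp add: N_def)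
  have N_ge: "Suc k \<le> N k" for k by (induct k) (simp_all add: N_def N_Suc)
  have N_mono: "mono N" unfolding mono_iff_le_Suc by (simp add: N_Suc le_max_iff_disj)
  let ?A = "\<lambda>k. range (nmul (p ^ k)) :: 'a set"
  define step where "step k s = (if from_nat k - s \<in> ?A (M (N k)) then \<epsilon> (N k) else 0)" for k s
  define a where "a = rec_nat 0 (\<lambda>k s. s + step k s)"
  define d where "d k = step k (a k)" for k
  have a_sum: "a k = (\<Sum>i<k. d i)" for k by (induct k) (simp_all add: a_def d_def)
  have d_N: "d k \<in> ?A (N k)" for k
    using \<epsilon>(2)[of "N k"] by (auto simp: d_def step_def intro: image_eqI[of _ _ 0])
  have "\<exists>k. \<alpha> - (\<Sum>i<k. d i) \<notin> ?A k" for \<alpha>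
    unfolding a_sum[symmetric]
  proof (rule ccontr)
    assume "\<nexists>k. \<alpha> - a k \<notin> ?A k"
    then have conv: "\<alpha> - a k \<in> ?A k" for k by blast
    define k where "k = to_nat \<alpha>"
    define m where "m = M (N k)"
    have A_m: "is_subgroup (?A m)" by (rule is_subgroup_image_nmul[OF is_subgroup_UNIV])
    have a_Suc: "a (Suc k) = a k + step k (a k)" by (simp add: a_def)
    have k: "from_nat k = \<alpha>" by (simp add: k_def)
    have "\<alpha> - a (Suc k) \<notin> ?A m"
      using diagonal_step_not_divisible[OF \<epsilon>(3)] by (simp add: a_Suc step_def k m_def)
    moreover have "\<alpha> - a (Suc k + m) \<in> ?A m"
      using conv[of "Suc k + m"] range_nmul_power_antimono[of m "Suc k + m" p] by (meson le_add2 subsetD)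
    moreover have "a (Suc k + m) - a (Suc k) \<in> ?A m"
    proof -
      have "a (Suc k + m) - a (Suc k) \<in> ?A (N (Suc k))"
        using sum_tail_in_range_nmul[OF N_mono d_N, of "Suc k" m] by (simp add: a_sum)
      moreover have "m \<le> N (Suc k)" by (simp add: N_Suc m_def)
      ultimately show ?thesis using range_nmul_power_antimono by blast
    qed
    ultimately show False
      using is_subgroupD(2)[OF A_m, of "\<alpha> - a (Suc k + m)" "a (Suc k + m) - a (Suc k)"] by simp
  qed
  moreover have "d k \<in> ?A (Suc k)" for k
    using d_N[of k] range_nmul_power_antimono[OF N_ge[of k]] by auto
  moreover have "nmul p (d k) = 0" for k using \<epsilon>(1) by (simp add: d_def step_def)
  ultimately show ?thesis using that by blast
qed

lemma height_preserving_zero_cocycle_cyclic: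
  fixes y :: "'t::ab_group_add" and b :: "'a::ab_group_add"
  assumes b: "b \<in> range (nmul (p ^ k))"
    and \<sigma>: "\<And>i. \<sigma> (nmul i y) = (nmul i b, nmul i y)" "\<sigma> 0 = (0, 0)"
  shows "height_preserving (\<lambda>_. 0) p (ann (p ^ k)) (adjoin {0} y) \<sigma>"
  unfolding height_preserving_def
proof (intro ballI allI impI)
  fix u j assume u: "u \<in> adjoin {0} y" and uj: "u \<in> nmul (p ^ j) ` ann (p ^ k)"
  obtain i where ui: "u = nmul i y" using u by (auto elim: adjoinE)
  obtain w where w: "w \<in> ann (p ^ k)" "u = nmul (p ^ j) w" using uj by blast
  show "\<sigma> u \<in> ext_multiples (\<lambda>_. 0) (p ^ j) (ann (p ^ k))"
  proof (cases "j \<le> k")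
    case True
    obtain b' where "b = nmul (p ^ k) b'" using b by blast
    moreover have "p ^ k = p ^ j * p ^ (k - j)" using True by (simp flip: power_add)
    ultimately have "nmul i b = nmul (p ^ j) (nmul i (nmul (p ^ (k - j)) b'))"
      by (simp add: nmul_mult nmul_commute[of i])
    then have "\<sigma> u = ext_mul (\<lambda>_. 0) (p ^ j) (nmul i (nmul (p ^ (k - j)) b'), w)"
      using \<sigma>(1) ui w(2) by (simp add: ext_mul_zero_cocycle)
    then show ?thesis using w(1) unfolding ext_multiples_def by force
  next
    case False
    then have "p ^ j = p ^ (j - k) * p ^ k" by (simp flip: power_add)
    then have "u = 0" using w by (simp add: ann_def nmul_mult)
    then show ?thesis
      using cocycle.zero_mem_ext_multiples[OF cocycle_zero is_subgroup_ann] \<sigma>(2) by simp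
  qed
qed

text \<open>For the zero cocycle a lift is a homomorphism into \<open>A \<times> T\<close>, so the extension
  lemma for height-preserving lifts produces homomorphisms into \<open>A\<close>.\<close>

lemma exists_hom_on_ann:
  fixes y :: "'t::{ab_group_add,countable}" and b :: "'a::ab_group_add"
  assumes T: "p_group p TYPE('t)" and y: "y \<noteq> 0" "nmul p y = 0"
    and b: "nmul p b = 0" "b \<in> range (nmul (p ^ Suc k))"
  obtains \<psi> where "\<forall>u\<in>ann (p ^ Suc k). \<forall>v\<in>ann (p ^ Suc k). \<psi> (u + v) = \<psi> u + \<psi> v" "\<psi> y = b"
proof -
  let ?c = "(\<lambda>_. 0) :: 't \<times> 't \<Rightarrow> 'a" and ?W = "ann (p ^ Suc k) :: 't set"
  interpret cocycle ?c by (rule cocycle_zero)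
  have pr: "prime p" using T unfolding p_group_def by blast
  have p0: "p > 0" using pr prime_gt_0_nat by blast
  have yW: "y \<in> ?W" using y(2) by (simp add: ann_def nmul_mult nmul_commute[of p])
  have pure: "pure_on ?c p ?W"
    unfolding pure_on_def ext_multiples_def by (auto simp: ext_mul_zero_cocycle)
  have "nmul (p ^ Suc k) ` ?W \<subseteq> {0}" by (auto simp: ann_def)
  then have no_inf: "\<forall>w\<in>?W. w \<noteq> 0 \<longrightarrow> (\<exists>j. w \<notin> nmul (p ^ j) ` ?W)" by blast
  have "y \<notin> {0}" "nmul p y \<in> {0}" using y by simp_all
  moreover have "ext_mul ?c p (b, y) = (\<lambda>_. (0, 0)) (nmul p y)"
    using b(1) y(2) by (simp add: ext_mul_zero_cocycle)
  moreover have "hom_lift ?c {0} (\<lambda>_. (0, 0))" by (simp add: hom_lift_def)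
  ultimately obtain \<sigma>0 where \<sigma>0: "hom_lift ?c (adjoin {0} y) \<sigma>0"
    "\<forall>i. \<sigma>0 (0 + nmul i y) = ext_add ?c (0, 0) (ext_mul ?c i (b, y))"
    using hom_lift_adjoin[OF is_subgroup_zero _ _ _ pr, of "\<lambda>_. (0, 0)" y "(b, y)"] by auto
  have \<sigma>0_val: "\<sigma>0 (nmul i y) = (nmul i b, nmul i y)" for i
    using \<sigma>0(2) by (simp add: ext_mul_zero_cocycle)
  have "height_preserving ?c p ?W (adjoin {0} y) \<sigma>0"
    using height_preserving_zero_cocycle_cyclic[OF b(2) \<sigma>0_val] \<sigma>0_val[of 0] by simp
  moreover have "finite (adjoin {0} y)" using finite_adjoin[OF _ is_subgroup_zero _ p0] y(2) by simp
  moreover have "adjoin {0} y \<subseteq> ?W"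
    using adjoin_subset[OF is_subgroup_ann _ yW] is_subgroupD(1)[OF is_subgroup_ann] by blast
  ultimately obtain \<sigma> where \<sigma>: "\<forall>v\<in>adjoin {0} y. \<sigma> v = \<sigma>0 v" "hom_lift ?c ?W \<sigma>"
    using height_preserving_lift_extends[OF cocycle_zero T is_subgroup_ann pure no_inf _
      is_subgroup_adjoin[OF is_subgroup_zero _ p0] _ \<sigma>0(1)] y(2) by auto
  have "\<forall>u\<in>?W. \<forall>v\<in>?W. fst (\<sigma> (u + v)) = fst (\<sigma> u) + fst (\<sigma> v)"
    using \<sigma>(2) unfolding hom_lift_def by (simp add: ext_add_def)
  moreover have "fst (\<sigma> y) = b"
    using \<sigma>(1) mem_adjoin_self[OF is_subgroup_zero, of y] \<sigma>0_val[of 1] by simp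
  ultimately show ?thesis using that[of "\<lambda>v. fst (\<sigma> v)"] by blast
qed

lemma finite_subset_ann_power:
  assumes T: "p_group p TYPE('t::ab_group_add)" and X: "finite (X :: 't set)"
  obtains k where "X \<subseteq> ann (p ^ k)"
proof -
  have "\<exists>k. X \<subseteq> ann (p ^ k)"
    using X
  proof (induct X rule: finite_induct)
    case (insert x X)
    then obtain k where "X \<subseteq> ann (p ^ k)" by blast
    moreover obtain k' where "x \<in> ann (p ^ k')" using T unfolding p_group_def ann_def by blast
    ultimately have "insert x X \<subseteq> ann (p ^ max k k')"
      using ann_power_mono[of k "max k k'" p] ann_power_mono[of k' "max k k'" p] by auto
    then show ?case by blast
  qed simp
  then show ?thesis using that by blast
qed

definition level_sum :: "nat \<Rightarrow> (nat \<Rightarrow> 't::ab_group_add \<Rightarrow> 'a::ab_group_add) \<Rightarrow> nat \<Rightarrow> 't \<Rightarrow> 'a" where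
  "level_sum p \<psi> k x = (\<Sum>i<k. if x \<in> ann (p ^ Suc i) then \<psi> i x else 0)"

lemma additive_on_zero:
  assumes "is_subgroup W" "\<forall>u\<in>W. \<forall>v\<in>W. h (u + v) = h u + h v"
  shows "h 0 = (0::'a::ab_group_add)"
proof -
  have "h (0 + 0) = h 0 + h 0" using assms is_subgroupD(1) by blast
  then show ?thesis by simp
qed

lemma additive_on_nmul:
  assumes W: "is_subgroup W" and h: "\<forall>u\<in>W. \<forall>v\<in>W. h (u + v) = h u + h v" and z: "z \<in> W"
  shows "h (nmul n z) = nmul n (h z :: 'a::ab_group_add)"
proof (induct n)
  case 0 then show ?case using additive_on_zero[OF W h] by simp
next
  case (Suc n)
  then show ?case using h z subgroup_nmul[OF W z, of n] by simp
qed

lemma level_sum_zero: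
  assumes "\<And>k. \<forall>u\<in>ann (p ^ Suc k). \<forall>v\<in>ann (p ^ Suc k). \<psi> k (u + v) = \<psi> k u + \<psi> k v"
  shows "level_sum p \<psi> k 0 = 0"
  using additive_on_zero[OF is_subgroup_ann assms] by (simp add: level_sum_def ann_def)

context
  fixes \<psi> :: "nat \<Rightarrow> 't::ab_group_add \<Rightarrow> 'a::ab_group_add" and p :: nat
  assumes \<psi>: "\<And>k. \<forall>u\<in>ann (p ^ Suc k). \<forall>v\<in>ann (p ^ Suc k). \<psi> k (u + v) = \<psi> k u + \<psi> k v"
begin

lemma level_sum_coboundary_Suc:
  assumes "x \<in> ann (p ^ Suc k)" "z \<in> ann (p ^ Suc k)"
  shows "level_sum p \<psi> (Suc k) z - level_sum p \<psi> (Suc k) (x + z) + level_sum p \<psi> (Suc k) x =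
    level_sum p \<psi> k z - level_sum p \<psi> k (x + z) + level_sum p \<psi> k x"
proof -
  have xz: "x + z \<in> ann (p ^ Suc k)" using assms is_subgroupD(2)[OF is_subgroup_ann] by blast
  then have "\<psi> k z - \<psi> k (x + z) + \<psi> k x = 0" using assms \<psi>[of k] by simp
  then show ?thesis using assms xz by (simp add: level_sum_def algebra_simps)
qed

lemma level_sum_coboundary_stable:
  assumes "k \<le> k'" "x \<in> ann (p ^ Suc k)" "z \<in> ann (p ^ Suc k)"
  shows "level_sum p \<psi> k' z - level_sum p \<psi> k' (x + z) + level_sum p \<psi> k' x =
    level_sum p \<psi> k z - level_sum p \<psi> k (x + z) + level_sum p \<psi> k x"
  using assms(1)
proof (induct k')
  case (Suc k')
  show ?case
  proof (cases "k \<le> k'")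
    case True
    then have "x \<in> ann (p ^ Suc k')" "z \<in> ann (p ^ Suc k')"
      using ann_power_mono[of "Suc k" "Suc k'" p] assms(2,3) by auto
    then show ?thesis using level_sum_coboundary_Suc Suc.hyps True by simp
  next
    case False
    then show ?thesis using Suc.prems by (simp add: le_Suc_eq)
  qed
qed simp

end

text \<open>If each \<open>\<psi> k\<close> is additive on \<open>T[p\<^sup>k\<^sup>+\<^sup>1]\<close>, the coboundaries of the partial sums
  \<open>level_sum p \<psi> k\<close> agree on \<open>T[p\<^sup>k\<^sup>+\<^sup>1]\<close> from \<open>k\<close> on, so they glue to a cocycle that
  splits on every finite set.\<close>

lemma exists_cocycle_of_level_homs:
  fixes \<psi> :: "nat \<Rightarrow> 't::ab_group_add \<Rightarrow> 'a::ab_group_add"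
  assumes T: "p_group p TYPE('t)"
    and \<psi>: "\<And>k. \<forall>u\<in>ann (p ^ Suc k). \<forall>v\<in>ann (p ^ Suc k). \<psi> k (u + v) = \<psi> k u + \<psi> k v"
  obtains c :: "'t \<times> 't \<Rightarrow> 'a" where "c \<in> cocycles" "locally_split c"
    "\<And>k x z. x \<in> ann (p ^ Suc k) \<Longrightarrow> z \<in> ann (p ^ Suc k) \<Longrightarrow>
       c (x, z) = level_sum p \<psi> k z - level_sum p \<psi> k (x + z) + level_sum p \<psi> k x"
proof -
  let ?W = "\<lambda>k. ann (p ^ Suc k) :: 't set"
  define \<phi> where "\<phi> = level_sum p \<psi>"
  define \<delta> where "\<delta> f x z = f z - f (x + z) + f x" for f :: "'t \<Rightarrow> 'a" and x z
  have \<phi>0: "\<phi> k 0 = 0" for k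
    unfolding \<phi>_def by (rule level_sum_zero[OF \<psi>])
  have \<delta>_stable: "\<delta> (\<phi> k') x z = \<delta> (\<phi> k) x z" if "k \<le> k'" "x \<in> ?W k" "z \<in> ?W k" for k k' x z
    using level_sum_coboundary_stable[OF \<psi> that] by (simp add: \<delta>_def \<phi>_def)
  define L where "L x z = (LEAST k. x \<in> ?W k \<and> z \<in> ?W k)" for x z
  define c where "c = (\<lambda>(x, z). \<delta> (\<phi> (L x z)) x z)"
  have c: "c (x, z) = \<delta> (\<phi> k) x z" if "x \<in> ?W k" "z \<in> ?W k" for x z k
  proof -
    have k: "x \<in> ?W k \<and> z \<in> ?W k" using that by simp
    have "x \<in> ?W (L x z) \<and> z \<in> ?W (L x z)" unfolding L_def by (rule LeastI[where P = "\<lambda>k. x \<in> ?W k \<and> z \<in> ?W k", OF k])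
    moreover have "L x z \<le> k" unfolding L_def by (rule Least_le[where P = "\<lambda>k. x \<in> ?W k \<and> z \<in> ?W k", OF k])
    ultimately show ?thesis using \<delta>_stable[of "L x z" k x z] by (simp add: c_def)
  qed
  have level: "\<exists>k. X \<subseteq> ?W k" if X: "finite X" for X
  proof -
    obtain k where "X \<subseteq> ann (p ^ k)" using finite_subset_ann_power[OF T X] by blast
    then show ?thesis using ann_power_mono[of k "Suc k" p] by auto
  qed
  have "c \<in> cocycles"
    unfolding cocycles_def
  proof (intro CollectI conjI allI)
    fix x :: 't
    obtain k where "{x, 0} \<subseteq> ?W k" using level[of "{x, 0}"] by auto
    then show "c (x, 0) = 0" using c[of x k 0] \<phi>0 by (simp add: \<delta>_def)
  next
    fix x z :: 't
    obtain k where "{x, z} \<subseteq> ?W k" using level[of "{x, z}"] by auto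
    then show "c (x, z) = c (z, x)" using c[of x k z] c[of z k x] by (simp add: \<delta>_def add.commute)
  next
    fix x y z :: 't
    obtain k where "{x, y, z} \<subseteq> ?W k" using level[of "{x, y, z}"] by auto
    then have xyz: "x \<in> ?W k" "y \<in> ?W k" "z \<in> ?W k" by auto
    then have "x + y \<in> ?W k" "y + z \<in> ?W k" using is_subgroupD(2)[OF is_subgroup_ann] by auto
    then show "c (y, z) - c (x + y, z) + c (x, y + z) - c (x, y) = 0"
      using c[OF xyz(2,3)] c[OF _ xyz(3)] c[OF xyz(1)] c[OF xyz(1,2)] by (simp add: \<delta>_def add.assoc)
  qed
  moreover have "locally_split c"
    unfolding locally_split_def
  proof (intro allI impI)
    fix F :: "('t \<times> 't) set" assume "finite F"
    then have "finite (fst ` F \<union> snd ` F)" by simp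
    then obtain k where k: "fst ` F \<union> snd ` F \<subseteq> ?W k" using level by blast
    show "\<exists>\<phi>'. \<phi>' 0 = 0 \<and> (\<forall>x z. (x, z) \<in> F \<longrightarrow> c (x, z) = \<phi>' z - \<phi>' (x + z) + \<phi>' x)"
    proof (intro exI[of _ "\<phi> k"] conjI allI impI)
      fix x z assume "(x, z) \<in> F"
      then have "x \<in> fst ` F" "z \<in> snd ` F" by (simp_all add: rev_image_eqI)
      then show "c (x, z) = \<phi> k z - \<phi> k (x + z) + \<phi> k x" using c[of x k z] k by (auto simp: \<delta>_def)
    qed (rule \<phi>0)
  qed
  ultimately show ?thesis by (rule that) (use c in \<open>simp add: \<phi>_def \<delta>_def\<close>)
qed

lemma coboundary_imp_level_sums_converge:
  fixes c :: "'t::ab_group_add \<times> 't \<Rightarrow> 'a::ab_group_add"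
  assumes T: "p_group p TYPE('t)"
    and \<psi>: "\<And>k. \<forall>u\<in>ann (p ^ Suc k). \<forall>v\<in>ann (p ^ Suc k). \<psi> k (u + v) = \<psi> k u + \<psi> k v"
    and c: "\<And>k x z. x \<in> ann (p ^ Suc k) \<Longrightarrow> z \<in> ann (p ^ Suc k) \<Longrightarrow>
       c (x, z) = level_sum p \<psi> k z - level_sum p \<psi> k (x + z) + level_sum p \<psi> k x"
    and cob: "c \<in> coboundaries" and y: "y \<in> ulm1" "nmul p y = 0"
  obtains \<alpha> where "\<And>k. \<alpha> - level_sum p \<psi> k y \<in> range (nmul (p ^ k))"
proof -
  obtain f where f: "f 0 = 0" "\<And>x z. c (x, z) = f z - f (x + z) + f x"
    using cob unfolding coboundaries_def by blast
  have "f y - level_sum p \<psi> k y \<in> range (nmul (p ^ k))" for k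
  proof -
    let ?W = "ann (p ^ Suc k) :: 't set"
    define h where "h x = f x - level_sum p \<psi> k x" for x
    have h: "\<forall>u\<in>?W. \<forall>v\<in>?W. h (u + v) = h u + h v"
    proof (intro ballI)
      fix u v assume "u \<in> ?W" "v \<in> ?W"
      then have "f v - f (u + v) + f u = level_sum p \<psi> k v - level_sum p \<psi> k (u + v) + level_sum p \<psi> k u"
        using c f(2) by simp
      then show "h (u + v) = h u + h v" by (simp add: h_def algebra_simps)
    qed
    obtain z where z: "y = nmul (p ^ k) z" using y(1) mem_ulm1_iff[OF T] by blast
    then have "z \<in> ?W" using y(2) by (simp add: ann_def nmul_mult)
    then have "h y = nmul (p ^ k) (h z)" using additive_on_nmul[OF is_subgroup_ann h] z by simp
    then show ?thesis by (metis h_def rangeI)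
  qed
  then show ?thesis using that by blast
qed

lemma exists_locally_split_non_coboundary:
  assumes T: "p_group p TYPE('t::{ab_group_add,countable})"
    and A: "p_group p TYPE('a::{ab_group_add,countable})" and red: "reduced TYPE('a)"
    and unb: "\<not> bounded_grp TYPE('a)" and ulm: "(ulm1 :: 't set) \<noteq> {0}"
  obtains c where "(c :: 't \<times> 't \<Rightarrow> 'a) \<in> cocycles" "locally_split c" "c \<notin> coboundaries"
proof -
  obtain y :: 't where y: "y \<in> ulm1" "y \<noteq> 0" "nmul p y = 0"
    using ulm1_order_p_element[OF T ulm] by blast
  obtain d :: "nat \<Rightarrow> 'a" where d: "\<And>k. nmul p (d k) = 0" "\<And>k. d k \<in> range (nmul (p ^ Suc k))"
    "\<And>\<alpha>. \<exists>k. \<alpha> - (\<Sum>i<k. d i) \<notin> range (nmul (p ^ k))"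
    using exists_nonconvergent_socle_series[OF A red unb] by blast
  have "\<exists>\<psi>. (\<forall>u\<in>ann (p ^ Suc k). \<forall>v\<in>ann (p ^ Suc k). \<psi> (u + v) = \<psi> u + \<psi> v) \<and> \<psi> y = d k"
    for k
  proof -
    obtain \<psi> where "\<forall>u\<in>ann (p ^ Suc k). \<forall>v\<in>ann (p ^ Suc k). \<psi> (u + v) = \<psi> u + \<psi> v" "\<psi> y = d k"
      by (rule exists_hom_on_ann[OF T y(2,3) d(1,2)])
    then show ?thesis by blast
  qed
  then obtain \<psi> where \<psi>: "\<And>k. \<forall>u\<in>ann (p ^ Suc k). \<forall>v\<in>ann (p ^ Suc k). \<psi> k (u + v) = \<psi> k u + \<psi> k v"
    "\<And>k. \<psi> k y = d k"
    by metis
  obtain c :: "'t \<times> 't \<Rightarrow> 'a" where c: "c \<in> cocycles" "locally_split c"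
    "\<And>k x z. x \<in> ann (p ^ Suc k) \<Longrightarrow> z \<in> ann (p ^ Suc k) \<Longrightarrow>
       c (x, z) = level_sum p \<psi> k z - level_sum p \<psi> k (x + z) + level_sum p \<psi> k x"
    using exists_cocycle_of_level_homs[OF T \<psi>(1)] by blast
  have "c \<notin> coboundaries"
  proof
    assume "c \<in> coboundaries"
    then obtain \<alpha> where "\<And>k. \<alpha> - level_sum p \<psi> k y \<in> range (nmul (p ^ k))"
      using coboundary_imp_level_sums_converge[OF T \<psi>(1) c(3) _ y(1,3)] by blast
    moreover have "level_sum p \<psi> k y = (\<Sum>i<k. d i)" for k
      using y(3) \<psi>(2) by (simp add: level_sum_def ann_def nmul_mult nmul_commute[of p])
    ultimately show False using d(3)[of \<alpha>] by simp
  qed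
  then show ?thesis using that c(1,2) by blast
qed

theorem lemma4p21:
  fixes p :: nat
  assumes "p_group p TYPE('t::{ab_group_add, countable})"
      and "p_group p TYPE('a::{ab_group_add, countable})"
      and "reduced TYPE('a)"
  shows "Ext_polish TYPE('t) TYPE('a) \<longleftrightarrow> (ulm1 :: 't set) = {0} \<or> bounded_grp TYPE('a)"
  unfolding Ext_polish_iff_locally_split
proof
  assume "\<forall>c::'t \<times> 't \<Rightarrow> 'a. c \<in> cocycles \<longrightarrow> locally_split c \<longrightarrow> c \<in> coboundaries"
  then show "(ulm1 :: 't set) = {0} \<or> bounded_grp TYPE('a)"
    using exists_locally_split_non_coboundary[OF assms] by blast
next
  assume "(ulm1 :: 't set) = {0} \<or> bounded_grp TYPE('a)"
  then show "\<forall>c::'t \<times> 't \<Rightarrow> 'a. c \<in> cocycles \<longrightarrow> locally_split c \<longrightarrow> c \<in> coboundaries"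
    using coboundary_if_ulm1_zero[OF assms(1)] coboundary_if_bounded[OF assms(1,2)] by blast
qed

end
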